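(* Let $\pi$ be any probability distribution on $[K]^n$ ($K\ge2$), $\xi\in[0,n]$ and $s\in(0,1)$. The Markov kernel $Q_{\mathrm{NR}}$ is $\tilde\pi$-invariant, where $\tilde\pi(c,v)=\pi(c)\,2^{-K(K-1)/2}$ on $[K]^n\times\{-1,+1\}^{\mathcal K}$. Moreover, if $\pi(c)>0$ for every $c\in[K]^n$, then $Q_{\mathrm{NR}}$ is irreducible, aperiodic and uniformly ergodic.
   Context: Notation: $[K]=\{1,\dots,K\}$; $n_k(c)=\#\{i:c_i=k\}$; $(c_{-i},k)$ is $c$ with $c_i$ replaced by $k$; $\pi(c_i=k\mid c_{-i})=\pi((c_{-i},k))/\sum_j\pi((c_{-i},j))$. $\mathcal{K}=\{(k,k')\in[K]^2:k<k'\}$. $r(c,i,k_-,k_+)=\frac{n_{k_-}(c)}{n_{k_+}(c)+1}\cdot\frac{\pi(c_i=k_+\mid c_{-i})}{\pi(c_i=k_-\mid c_{-i})}$. For $(k,k')\in\mathcal K$, $\tilde P_{k,k'}$ is the kernel on $[K]^n\times\{-1,+1\}^{\mathcal K}$ that from $(c,v)$: (1) with probability $\xi/n$ negates $v_{k,k'}$; (2) sets $(k_-,k_+)=(k,k')$ if $v_{k,k'}=+1$, $(k_-,k_+)=(k',k)$ if $v_{k,k'}=-1$; (3) if $n_{k_-}(c)=0$ sets $c'=c$ and $v'=v$ with $v_{k,k'}$ negated; otherwise picks $i$ uniformly from $\{i':c_{i'}=k_-\}$ and with probability $\min\{1,r(c,i,k_-,k_+)\}$ sets $(c',v')=((c_{-i},k_+),v)$,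 else $c'=c$, $v'=v$ with $v_{k,k'}$ negated; (4) with probability $\xi/n$ negates $v'_{k,k'}$. $Q_{\mathrm{NR}}$: from $(c,v)$, sample $(k,k')$ uniformly from $\mathcal K$, sample $t\in\{1,2,\dots\}$ from the geometric distribution with success probability $s/(n_k(c)+n_{k'}(c))$ (i.e. $Q_{\mathrm{NR}}=\sum_{(k,k')\in\mathcal K}\frac{2}{K(K-1)}\sum_{t\ge1}q_{m_c(k,k')}(t)\tilde P_{k,k'}^t$, with $m_c(k,k')=(n_k(c)+n_{k'}(c))/s$ and $q_m$ the geometric pmf with parameter $1/m$; when $n_k(c)+n_{k'}(c)=0$ take $t=1$), and apply $\tilde P^t_{k,k'}$. *)

theory Defs
  imports "HOL-Analysis.Analysis"
begin

type_synonym config = "nat \<Rightarrow> nat"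
type_synonym velo = "nat \<times> nat \<Rightarrow> int"
type_synonym state = "config \<times> velo"

definition kcomp :: "'s set \<Rightarrow> ('s \<Rightarrow> 's \<Rightarrow> real) \<Rightarrow> ('s \<Rightarrow> 's \<Rightarrow> real) \<Rightarrow> 's \<Rightarrow> 's \<Rightarrow> real" where
  "kcomp S P R x y = (\<Sum>z\<in>S. P x z * R z y)"

fun kpow :: "'s set \<Rightarrow> ('s \<Rightarrow> 's \<Rightarrow> real) \<Rightarrow> nat \<Rightarrow> 's \<Rightarrow> 's \<Rightarrow> real" where
  "kpow S P 0 x y = (if x = y then 1 else 0)"
| "kpow S P (Suc t) x y = (\<Sum>z\<in>S. P x z * kpow S P t z y)"

definition invariant_kernel :: "'s set \<Rightarrow> ('s \<Rightarrow> 's \<Rightarrow> real) \<Rightarrow> ('s \<Rightarrow> real) \<Rightarrow> bool" where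
  "invariant_kernel S P \<mu> \<longleftrightarrow> (\<forall>y\<in>S. (\<Sum>x\<in>S. \<mu> x * P x y) = \<mu> y)"

definition irreducible_kernel :: "'s set \<Rightarrow> ('s \<Rightarrow> 's \<Rightarrow> real) \<Rightarrow> bool" where
  "irreducible_kernel S P \<longleftrightarrow> (\<forall>x\<in>S. \<forall>y\<in>S. \<exists>t\<ge>1. kpow S P t x y > 0)"

definition aperiodic_kernel :: "'s set \<Rightarrow> ('s \<Rightarrow> 's \<Rightarrow> real) \<Rightarrow> bool" where
  "aperiodic_kernel S P \<longleftrightarrow> (\<forall>x\<in>S. Gcd {t::nat. t \<ge> 1 \<and> kpow S P t x x > 0} = 1)"

definition tv_dist :: "'s set \<Rightarrow> ('s \<Rightarrow> real) \<Rightarrow> ('s \<Rightarrow> real) \<Rightarrow> real" where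
  "tv_dist S p q = Max ((\<lambda>A. \<bar>(\<Sum>a\<in>A. p a) - (\<Sum>a\<in>A. q a)\<bar>) ` Pow S)"

definition uniformly_ergodic :: "'s set \<Rightarrow> ('s \<Rightarrow> 's \<Rightarrow> real) \<Rightarrow> ('s \<Rightarrow> real) \<Rightarrow> bool" where
  "uniformly_ergodic S P \<mu> \<longleftrightarrow>
     (\<exists>M \<rho>::real. 0 \<le> \<rho> \<and> \<rho> < 1 \<and> (\<forall>x\<in>S. \<forall>t. tv_dist S (kpow S P t x) \<mu> \<le> M * \<rho> ^ t))"

definition configs :: "nat \<Rightarrow> nat \<Rightarrow> config set" where
  "configs K n = {0..<n} \<rightarrow>\<^sub>E {1..K}"

definition pairsK :: "nat \<Rightarrow> (nat \<times> nat) set" where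
  "pairsK K = {(k, k'). 1 \<le> k \<and> k < k' \<and> k' \<le> K}"

definition velos :: "nat \<Rightarrow> velo set" where
  "velos K = pairsK K \<rightarrow>\<^sub>E {-1, 1}"

definition states :: "nat \<Rightarrow> nat \<Rightarrow> state set" where
  "states K n = configs K n \<times> velos K"

definition cnt :: "nat \<Rightarrow> config \<Rightarrow> nat \<Rightarrow> nat" where
  "cnt n c k = card {i. i < n \<and> c i = k}"

definition condp :: "(config \<Rightarrow> real) \<Rightarrow> nat \<Rightarrow> config \<Rightarrow> nat \<Rightarrow> nat \<Rightarrow> real" where
  "condp \<pi> K c i k = \<pi> (c(i := k)) / (\<Sum>j\<in>{1..K}. \<pi> (c(i := j)))"

definition ratio :: "(config \<Rightarrow> real) \<Rightarrow> nat \<Rightarrow> nat \<Rightarrow> config \<Rightarrow> nat \<Rightarrow> nat \<Rightarrow> nat \<Rightarrow> real" where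
  "ratio \<pi> K n c i km kp =
     real (cnt n c km) / (real (cnt n c kp) + 1) * (condp \<pi> K c i kp / condp \<pi> K c i km)"

definition flipv :: "nat \<times> nat \<Rightarrow> velo \<Rightarrow> velo" where
  "flipv p v = v(p := - v p)"

definition flip_kernel :: "real \<Rightarrow> nat \<Rightarrow> nat \<times> nat \<Rightarrow> state \<Rightarrow> state \<Rightarrow> real" where
  "flip_kernel \<xi> n p x y =
     (1 - \<xi> / real n) * (if y = x then 1 else 0)
     + (\<xi> / real n) * (if y = (fst x, flipv p (snd x)) then 1 else 0)"

definition move_kernel :: "(config \<Rightarrow> real) \<Rightarrow> nat \<Rightarrow> nat \<Rightarrow> nat \<times> nat \<Rightarrow> state \<Rightarrow> state \<Rightarrow> real" where
  "move_kernel \<pi> K n p x y =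
     (let c = fst x; v = snd x;
          (km, kp) = (if v p = 1 then (fst p, snd p) else (snd p, fst p));
          rej = (c, flipv p v)
      in if cnt n c km = 0 then (if y = rej then 1 else 0)
         else (\<Sum>i\<in>{i. i < n \<and> c i = km}.
                 (1 / real (cnt n c km)) *
                 (min 1 (ratio \<pi> K n c i km kp) * (if y = (c(i := kp), v) then 1 else 0)
                  + (1 - min 1 (ratio \<pi> K n c i km kp)) * (if y = rej then 1 else 0))))"

definition Ptilde :: "(config \<Rightarrow> real) \<Rightarrow> nat \<Rightarrow> nat \<Rightarrow> real \<Rightarrow> nat \<times> nat \<Rightarrow> state \<Rightarrow> state \<Rightarrow> real" where
  "Ptilde \<pi> K n \<xi> p =
     kcomp (states K n) (kcomp (states K n) (flip_kernel \<xi> n p) (move_kernel \<pi> K n p))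
       (flip_kernel \<xi> n p)"

definition geom_pmf :: "real \<Rightarrow> nat \<Rightarrow> real" where
  "geom_pmf q t = (1 - q) ^ (t - 1) * q"

definition Q_NR :: "(config \<Rightarrow> real) \<Rightarrow> nat \<Rightarrow> nat \<Rightarrow> real \<Rightarrow> real \<Rightarrow> state \<Rightarrow> state \<Rightarrow> real" where
  "Q_NR \<pi> K n \<xi> s x y =
     (\<Sum>p\<in>pairsK K. (2 / (real K * (real K - 1))) *
        (let N = cnt n (fst x) (fst p) + cnt n (fst x) (snd p)
         in if N = 0 then kpow (states K n) (Ptilde \<pi> K n \<xi> p) 1 x y
            else (\<Sum>j. geom_pmf (s / real N) (Suc j) * kpow (states K n) (Ptilde \<pi> K n \<xi> p) (Suc j) x y)))"

definition pi_tilde :: "(config \<Rightarrow> real) \<Rightarrow> nat \<Rightarrow> state \<Rightarrow> real" where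
  "pi_tilde \<pi> K x = \<pi> (fst x) * 2 powr (- (real K * (real K - 1) / 2))"

end

theory Submission
  imports Defs
begin

(* Each kernel Ptilde_{k,k'} composes two random velocity flips with a Metropolis move M.
   The flips preserve pi_tilde, and M satisfies the skew detailed balance
   pi(c) M((c,v),(c',v')) = pi(c') M((c',-v'),(c,-v)), where -v negates only v_{k,k'};
   summing over the start state gives invariance of M, hence of Ptilde_{k,k'}, of its
   powers and of their geometric mixtures. The geometric parameter of Q_NR depends on the
   current state only through n_k + n_k', which Ptilde_{k,k'} conserves, so it may as well
   be read off at the target state, and invariance survives the mixing.
   For positive pi, Ptilde_{k,k'} can move the labels k_- to k_+ one site at a time,
   reverse the velocity once none is left, and move them back (for xi = n the two sure
   flips exchange the roles of k_- and k_+). Hence the transition graph of Q_NR is strongly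
   connected with a loop at every state, so some power of Q_NR is positive; this gives
   irreducibility, aperiodicity and, by Doeblin's contraction argument, uniform ergodicity. *)

section \<open>Finite Markov kernels\<close>

definition stochastic_kernel :: "'s set \<Rightarrow> ('s \<Rightarrow> 's \<Rightarrow> real) \<Rightarrow> bool" where
  "stochastic_kernel S P \<longleftrightarrow> (\<forall>x\<in>S. \<forall>y\<in>S. 0 \<le> P x y) \<and> (\<forall>x\<in>S. (\<Sum>y\<in>S. P x y) = 1)"

lemma stochastic_kernel_nonneg: "stochastic_kernel S P \<Longrightarrow> x \<in> S \<Longrightarrow> y \<in> S \<Longrightarrow> 0 \<le> P x y"
  by (simp add: stochastic_kernel_def)

lemma stochastic_kernel_row_sum: "stochastic_kernel S P \<Longrightarrow> x \<in> S \<Longrightarrow> (\<Sum>y\<in>S. P x y) = 1"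
  by (simp add: stochastic_kernel_def)

lemma stochastic_kernel_le_one:
  assumes "finite S" "stochastic_kernel S P" "x \<in> S" "y \<in> S"
  shows "P x y \<le> 1"
proof -
  have "P x y \<le> (\<Sum>y\<in>S. P x y)"
    using assms by (intro member_le_sum) (auto simp: stochastic_kernel_def)
  then show ?thesis using assms by (simp add: stochastic_kernel_def)
qed

lemma kpow_one: "finite S \<Longrightarrow> y \<in> S \<Longrightarrow> kpow S P 1 x y = P x y"
  by (simp add: mult_delta_right)

lemma kpow_nonneg:
  assumes "\<forall>x\<in>S. \<forall>y\<in>S. 0 \<le> P x y" "x \<in> S" "y \<in> S"
  shows "0 \<le> kpow S P t x y"
  using assms(2,3) by (induction t arbitrary: x) (auto intro!: sum_nonneg simp: assms(1))

lemma kpow_add: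
  assumes "finite S" "x \<in> S"
  shows "kpow S P (a + b) x y = (\<Sum>z\<in>S. kpow S P a x z * kpow S P b z y)"
  using assms(2)
proof (induction a arbitrary: x)
  case 0
  then show ?case using assms(1) by (simp add: mult_delta_left)
next
  case (Suc a)
  have "kpow S P (Suc a + b) x y = (\<Sum>w\<in>S. P x w * (\<Sum>z\<in>S. kpow S P a w z * kpow S P b z y))"
    using Suc by simp
  also have "\<dots> = (\<Sum>z\<in>S. (\<Sum>w\<in>S. P x w * kpow S P a w z) * kpow S P b z y)"
    by (simp add: sum_distrib_left sum_distrib_right mult.assoc) (rule sum.swap)
  finally show ?case by simp
qed

lemma kpow_ge_mult:
  assumes "finite S" "\<forall>x\<in>S. \<forall>y\<in>S. 0 \<le> P x y" "x \<in> S" "y \<in> S" "z \<in> S"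
  shows "kpow S P a x z * kpow S P b z y \<le> kpow S P (a + b) x y"
  unfolding kpow_add[OF assms(1,3)]
  by (rule member_le_sum) (use assms kpow_nonneg[OF assms(2)] in auto)

lemma stochastic_kpow:
  assumes "finite S" "stochastic_kernel S P"
  shows "stochastic_kernel S (kpow S P t)"
proof -
  have "(\<Sum>y\<in>S. kpow S P t x y) = 1" if "x \<in> S" for x
    using that
  proof (induction t arbitrary: x)
    case (Suc t)
    have "(\<Sum>y\<in>S. kpow S P (Suc t) x y) = (\<Sum>z\<in>S. P x z * (\<Sum>y\<in>S. kpow S P t z y))"
      by (simp add: sum_distrib_left) (rule sum.swap)
    then show ?case using Suc assms(2) by (simp add: stochastic_kernel_def)
  qed (use assms(1) in simp)
  then show ?thesis
    using assms(2) kpow_nonneg[of S P] by (auto simp: stochastic_kernel_def)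
qed

lemma invariant_kpow:
  assumes "finite S" "invariant_kernel S P \<mu>"
  shows "invariant_kernel S (kpow S P t) \<mu>"
  unfolding invariant_kernel_def
proof (induction t)
  case 0
  then show ?case using assms(1) by (simp add: mult_delta_right)
next
  case (Suc t)
  have "(\<Sum>x\<in>S. \<mu> x * kpow S P (Suc t) x y) = (\<Sum>z\<in>S. (\<Sum>x\<in>S. \<mu> x * P x z) * kpow S P t z y)" for y
    by (simp add: sum_distrib_left sum_distrib_right mult.assoc) (rule sum.swap)
  then show ?case using Suc assms(2) by (simp add: invariant_kernel_def)
qed

lemma stochastic_kcomp:
  assumes "stochastic_kernel S P" "stochastic_kernel S R"
  shows "stochastic_kernel S (kcomp S P R)"
proof -
  have "(\<Sum>y\<in>S. kcomp S P R x y) = (\<Sum>z\<in>S. P x z * (\<Sum>y\<in>S. R z y))" for x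
    unfolding kcomp_def by (simp add: sum_distrib_left) (rule sum.swap)
  then show ?thesis
    using assms unfolding stochastic_kernel_def kcomp_def by (auto intro!: sum_nonneg)
qed

lemma invariant_kcomp:
  assumes "invariant_kernel S P \<mu>" "invariant_kernel S R \<mu>"
  shows "invariant_kernel S (kcomp S P R) \<mu>"
proof -
  have "(\<Sum>x\<in>S. \<mu> x * kcomp S P R x y) = (\<Sum>z\<in>S. (\<Sum>x\<in>S. \<mu> x * P x z) * R z y)" for y
    unfolding kcomp_def by (simp add: sum_distrib_left sum_distrib_right mult.assoc) (rule sum.swap)
  then show ?thesis using assms by (simp add: invariant_kernel_def)
qed

lemma kcomp_ge_mult:
  assumes "finite S" "stochastic_kernel S P" "stochastic_kernel S R" "x \<in> S" "y \<in> S" "z \<in> S"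
  shows "P x z * R z y \<le> kcomp S P R x y"
  unfolding kcomp_def
  by (rule member_le_sum) (use assms in \<open>auto simp: stochastic_kernel_def\<close>)

lemma kcomp_nonzeroE:
  assumes "kcomp S P R x y \<noteq> 0"
  obtains z where "z \<in> S" "P x z \<noteq> 0" "R z y \<noteq> 0"
proof -
  obtain z where "z \<in> S" "P x z * R z y \<noteq> 0"
    using assms unfolding kcomp_def by (rule sum.not_neutral_contains_not_neutral)
  then show ?thesis using that by simp
qed

lemma kpow_nonzero_conserves:
  assumes "\<And>x y. x \<in> S \<Longrightarrow> y \<in> S \<Longrightarrow> P x y \<noteq> 0 \<Longrightarrow> f x = f y"
    and "x \<in> S" "kpow S P t x y \<noteq> 0"
  shows "f x = f y"
  using assms(2,3)
proof (induction t arbitrary: x)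
  case (Suc t)
  obtain z where "z \<in> S" "P x z * kpow S P t z y \<noteq> 0"
    using Suc.prems(2) by (auto elim: sum.not_neutral_contains_not_neutral)
  then show ?case using Suc assms(1) by auto
qed (simp split: if_splits)

lemma stochastic_kernel_convex:
  assumes "finite I" "\<forall>i\<in>I. 0 \<le> w i" "(\<Sum>i\<in>I. w i) = 1" "\<forall>i\<in>I. stochastic_kernel S (P i)"
  shows "stochastic_kernel S (\<lambda>x y. \<Sum>i\<in>I. w i * P i x y)"
proof -
  have "(\<Sum>y\<in>S. \<Sum>i\<in>I. w i * P i x y) = (\<Sum>i\<in>I. w i * (\<Sum>y\<in>S. P i x y))" for x
    by (simp add: sum_distrib_left) (rule sum.swap)
  then show ?thesis
    using assms unfolding stochastic_kernel_def by (auto intro!: sum_nonneg)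
qed

lemma invariant_kernel_convex:
  assumes "finite I" "(\<Sum>i\<in>I. w i) = 1" "\<forall>i\<in>I. invariant_kernel S (P i) \<mu>"
  shows "invariant_kernel S (\<lambda>x y. \<Sum>i\<in>I. w i * P i x y) \<mu>"
proof -
  have "(\<Sum>x\<in>S. \<mu> x * (\<Sum>i\<in>I. w i * P i x y)) = (\<Sum>i\<in>I. w i * (\<Sum>x\<in>S. \<mu> x * P i x y))" for y
    by (simp add: sum_distrib_left algebra_simps) (rule sum.swap)
  then show ?thesis
    using assms unfolding invariant_kernel_def by (simp flip: sum_distrib_right)
qed

lemma stochastic_kernel_param:
  "(\<And>N. stochastic_kernel S (P N)) \<Longrightarrow> stochastic_kernel S (\<lambda>x y. P (f x) x y)"
  by (simp add: stochastic_kernel_def)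

lemma invariant_kernel_conserved_param:
  assumes "\<And>N. invariant_kernel S (P N) \<mu>"
    and "\<And>N x y. x \<in> S \<Longrightarrow> y \<in> S \<Longrightarrow> P N x y \<noteq> 0 \<Longrightarrow> f x = f y"
  shows "invariant_kernel S (\<lambda>x y. P (f x) x y) \<mu>"
  unfolding invariant_kernel_def
proof
  fix y assume y: "y \<in> S"
  have "P (f x) x y = P (f y) x y" if "x \<in> S" for x
  proof (cases "f x = f y")
    case False
    then show ?thesis using assms(2)[OF that y] by metis
  qed simp
  then show "(\<Sum>x\<in>S. \<mu> x * P (f x) x y) = \<mu> y"
    using assms(1)[of "f y"] y by (simp add: invariant_kernel_def cong: sum.cong)
qed

section \<open>Uniform ergodicity from a positive power\<close>

lemma card_mult_le_one:
  fixes \<epsilon> :: real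
  assumes "stochastic_kernel S R" "\<forall>x\<in>S. \<forall>y\<in>S. \<epsilon> \<le> R x y" "x \<in> S"
  shows "card S * \<epsilon> \<le> 1"
proof -
  have "card S * \<epsilon> = (\<Sum>y\<in>S. \<epsilon>)" by simp
  also have "\<dots> \<le> (\<Sum>y\<in>S. R x y)" using assms(2,3) by (intro sum_mono) auto
  finally show ?thesis using stochastic_kernel_row_sum[OF assms(1,3)] by simp
qed

lemma l1_contraction:
  fixes \<epsilon> :: real
  assumes "finite S" "stochastic_kernel S R" "\<forall>x\<in>S. \<forall>y\<in>S. \<epsilon> \<le> R x y" "(\<Sum>x\<in>S. d x) = 0"
  shows "(\<Sum>y\<in>S. \<bar>\<Sum>x\<in>S. d x * R x y\<bar>) \<le> (1 - card S * \<epsilon>) * (\<Sum>x\<in>S. \<bar>d x\<bar>)"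
proof -
  have "\<bar>\<Sum>x\<in>S. d x * R x y\<bar> \<le> (\<Sum>x\<in>S. \<bar>d x\<bar> * (R x y - \<epsilon>))" if "y \<in> S" for y
  proof -
    \<comment> \<open>since \<open>d\<close> sums to zero, the uniform part \<open>\<epsilon>\<close> of \<open>R\<close> cancels\<close>
    have "(\<Sum>x\<in>S. d x * R x y) = (\<Sum>x\<in>S. d x * (R x y - \<epsilon>))"
      using assms(4) by (simp add: right_diff_distrib sum_subtractf flip: sum_distrib_right)
    also have "\<bar>\<dots>\<bar> \<le> (\<Sum>x\<in>S. \<bar>d x * (R x y - \<epsilon>)\<bar>)"
      by (rule sum_abs)
    also have "\<dots> = (\<Sum>x\<in>S. \<bar>d x\<bar> * (R x y - \<epsilon>))"
      using assms(3) that by (intro sum.cong) (auto simp: abs_mult)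
    finally show ?thesis .
  qed
  then have "(\<Sum>y\<in>S. \<bar>\<Sum>x\<in>S. d x * R x y\<bar>) \<le> (\<Sum>y\<in>S. \<Sum>x\<in>S. \<bar>d x\<bar> * (R x y - \<epsilon>))"
    by (rule sum_mono)
  also have "\<dots> = (\<Sum>x\<in>S. \<bar>d x\<bar> * (\<Sum>y\<in>S. R x y - \<epsilon>))"
    by (subst sum.swap) (simp add: sum_distrib_left)
  also have "\<dots> = (\<Sum>x\<in>S. \<bar>d x\<bar> * (1 - card S * \<epsilon>))"
    using assms(2) by (intro sum.cong) (auto simp: stochastic_kernel_def sum_subtractf)
  finally show ?thesis by (simp add: sum_distrib_right mult.commute)
qed

lemma tv_dist_le_l1:
  assumes "finite S"
  shows "tv_dist S p q \<le> (\<Sum>y\<in>S. \<bar>p y - q y\<bar>)"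
proof -
  have "\<bar>sum p A - sum q A\<bar> \<le> (\<Sum>y\<in>S. \<bar>p y - q y\<bar>)" if "A \<subseteq> S" for A
  proof -
    have "\<bar>sum p A - sum q A\<bar> \<le> (\<Sum>y\<in>A. \<bar>p y - q y\<bar>)"
      by (metis sum_abs sum_subtractf)
    also have "\<dots> \<le> (\<Sum>y\<in>S. \<bar>p y - q y\<bar>)"
      using that assms by (intro sum_mono2) auto
    finally show ?thesis .
  qed
  then show ?thesis
    using assms unfolding tv_dist_def by (subst Max_le_iff) auto
qed

lemma l1_dist_kpow_le:
  fixes \<epsilon> :: real
  assumes "finite S" "stochastic_kernel S P"
    and "\<forall>x\<in>S. 0 \<le> \<mu> x" "(\<Sum>x\<in>S. \<mu> x) = 1" "invariant_kernel S P \<mu>"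
    and "\<forall>x\<in>S. \<forall>y\<in>S. \<epsilon> \<le> kpow S P m x y" "x \<in> S"
  shows "(\<Sum>y\<in>S. \<bar>kpow S P t x y - \<mu> y\<bar>) \<le> 2 * (1 - card S * \<epsilon>) ^ (t div m)"
proof -
  define d where "d t y = kpow S P t x y - \<mu> y" for t y
  define \<theta> where "\<theta> = 1 - card S * \<epsilon>"
  have st_m: "stochastic_kernel S (kpow S P m)" and st: "stochastic_kernel S (kpow S P t)" for t
    using stochastic_kpow[OF assms(1,2)] by auto
  have d_sum: "(\<Sum>y\<in>S. d t y) = 0" for t
    using stochastic_kernel_row_sum[OF st assms(7)] assms(4) by (simp add: d_def sum_subtractf)
  have d_step: "d (t + m) y = (\<Sum>z\<in>S. d t z * kpow S P m z y)" if "y \<in> S" for t y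
    using kpow_add[OF assms(1,7)] invariant_kpow[OF assms(1,5)] that
    by (simp add: d_def invariant_kernel_def left_diff_distrib sum_subtractf)
  have \<theta>_nonneg: "0 \<le> \<theta>"
    using card_mult_le_one[OF st_m assms(6,7)] by (simp add: \<theta>_def)
  have d_le_2: "(\<Sum>y\<in>S. \<bar>d t y\<bar>) \<le> 2" for t
  proof -
    have "\<bar>d t y\<bar> \<le> kpow S P t x y + \<mu> y" if "y \<in> S" for y
      using stochastic_kernel_nonneg[OF st[of t] assms(7) that] assms(3) that
      by (simp add: d_def abs_le_iff)
    then have "(\<Sum>y\<in>S. \<bar>d t y\<bar>) \<le> (\<Sum>y\<in>S. kpow S P t x y + \<mu> y)"
      by (rule sum_mono)
    also have "\<dots> = 2"
      using stochastic_kernel_row_sum[OF st assms(7)] assms(4) by (simp add: sum.distrib)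
    finally show ?thesis .
  qed
  have d_blocks: "(\<Sum>y\<in>S. \<bar>d (r + q * m) y\<bar>) \<le> 2 * \<theta> ^ q" for r q
  proof (induction q)
    case (Suc q)
    have "(\<Sum>y\<in>S. \<bar>d (r + Suc q * m) y\<bar>) = (\<Sum>y\<in>S. \<bar>\<Sum>z\<in>S. d (r + q * m) z * kpow S P m z y\<bar>)"
      using d_step[of _ "r + q * m"] by (intro sum.cong) (auto simp: algebra_simps)
    also have "\<dots> \<le> \<theta> * (\<Sum>y\<in>S. \<bar>d (r + q * m) y\<bar>)"
      unfolding \<theta>_def by (rule l1_contraction[OF assms(1) st_m assms(6) d_sum])
    also have "\<dots> \<le> \<theta> * (2 * \<theta> ^ q)"
      using Suc \<theta>_nonneg by (rule mult_left_mono)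
    finally show ?case by simp
  qed (simp add: d_le_2)
  show ?thesis
    using d_blocks[of "t mod m" "t div m"] by (simp add: d_def \<theta>_def)
qed

lemma power_div_le_geometric:
  fixes \<theta> :: real
  assumes "0 \<le> \<theta>" "\<theta> < 1" "1 \<le> m"
  obtains M \<rho> where "0 \<le> \<rho>" "\<rho> < 1" "\<And>t. \<theta> ^ (t div m) \<le> M * \<rho> ^ t"
proof
  define \<theta>' where "\<theta>' = max \<theta> (1 / 2)"
  define \<rho> where "\<rho> = root m \<theta>'"
  have \<theta>': "0 < \<theta>'" "\<theta>' < 1" "\<theta> \<le> \<theta>'"
    using assms by (auto simp: \<theta>'_def)
  have \<rho>: "0 < \<rho>" "\<rho> < 1" "\<rho> ^ m = \<theta>'"
    using \<theta>' assms(3) by (auto simp: \<rho>_def real_root_gt_zero)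
  show "0 \<le> \<rho>" "\<rho> < 1" using \<rho> by auto
  fix t
  have "\<theta>' = \<rho> ^ m" using \<rho> by simp
  also have "\<dots> \<le> \<rho> ^ (t mod m)"
    using \<rho> assms(3) by (intro power_decreasing) (auto intro: less_imp_le)
  finally have "\<theta>' * \<theta>' ^ (t div m) \<le> \<rho> ^ (t mod m) * \<rho> ^ (m * (t div m))"
    using \<rho> by (intro mult_mono) (auto simp: power_mult)
  also have "\<dots> = \<rho> ^ t"
    by (simp flip: power_add)
  finally have "\<theta>' ^ (t div m) \<le> \<rho> ^ t / \<theta>'"
    using \<theta>' by (simp add: field_simps)
  moreover have "\<theta> ^ (t div m) \<le> \<theta>' ^ (t div m)"
    using assms \<theta>' by (intro power_mono) auto
  ultimately show "\<theta> ^ (t div m) \<le> 1 / \<theta>' * \<rho> ^ t"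
    by simp
qed

theorem uniformly_ergodic_if_kpow_pos:
  assumes "finite S" "stochastic_kernel S P"
    and "\<forall>x\<in>S. 0 \<le> \<mu> x" "(\<Sum>x\<in>S. \<mu> x) = 1" "invariant_kernel S P \<mu>"
    and "1 \<le> m" "\<forall>x\<in>S. \<forall>y\<in>S. 0 < kpow S P m x y"
  shows "uniformly_ergodic S P \<mu>"
proof -
  obtain x0 where x0: "x0 \<in> S" using assms(4) by fastforce
  define \<epsilon> where "\<epsilon> = Min ((\<lambda>(x, y). kpow S P m x y) ` (S \<times> S))"
  have \<epsilon>_le: "\<forall>x\<in>S. \<forall>y\<in>S. \<epsilon> \<le> kpow S P m x y"
    unfolding \<epsilon>_def using assms(1) by (auto intro!: Min_le)
  have "0 < \<epsilon>"
    unfolding \<epsilon>_def using assms(1,7) x0 by (subst Min_gr_iff) auto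
  have "card S * \<epsilon> \<le> 1"
    using card_mult_le_one[OF stochastic_kpow[OF assms(1,2)] \<epsilon>_le x0] .
  moreover have "0 < card S * \<epsilon>"
    using \<open>0 < \<epsilon>\<close> x0 assms(1) by (intro mult_pos_pos) (auto simp: card_gt_0_iff)
  ultimately have "0 \<le> 1 - card S * \<epsilon>" "1 - card S * \<epsilon> < 1"
    by auto
  then obtain M \<rho> where \<rho>: "0 \<le> \<rho>" "\<rho> < 1"
    and decay: "\<And>t. (1 - card S * \<epsilon>) ^ (t div m) \<le> M * \<rho> ^ t"
    using power_div_le_geometric[OF _ _ assms(6)] by metis
  have "tv_dist S (kpow S P t x) \<mu> \<le> 2 * M * \<rho> ^ t" if "x \<in> S" for x t
  proof -
    have "tv_dist S (kpow S P t x) \<mu> \<le> (\<Sum>y\<in>S. \<bar>kpow S P t x y - \<mu> y\<bar>)"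
      by (rule tv_dist_le_l1[OF assms(1)])
    also have "\<dots> \<le> 2 * (1 - card S * \<epsilon>) ^ (t div m)"
      by (rule l1_dist_kpow_le[OF assms(1-5) \<epsilon>_le that])
    also have "\<dots> \<le> 2 * M * \<rho> ^ t"
      using decay[of t] by simp
    finally show ?thesis .
  qed
  then show ?thesis
    unfolding uniformly_ergodic_def using \<rho> by blast
qed

section \<open>Irreducibility and aperiodicity from the transition graph\<close>

definition kedge :: "'s set \<Rightarrow> ('s \<Rightarrow> 's \<Rightarrow> real) \<Rightarrow> 's \<Rightarrow> 's \<Rightarrow> bool" where
  "kedge S P x y \<longleftrightarrow> x \<in> S \<and> y \<in> S \<and> 0 < P x y"

lemma kpow_pos_if_tranclp_kedge:
  assumes "finite S" "\<forall>x\<in>S. \<forall>y\<in>S. 0 \<le> P x y" "(kedge S P)\<^sup>+\<^sup>+ x y"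
  shows "\<exists>t\<ge>1. 0 < kpow S P t x y"
proof -
  have "x \<in> S"
    using assms(3) by (induction rule: tranclp_induct) (auto simp: kedge_def)
  have "y \<in> S \<and> (\<exists>t\<ge>1. 0 < kpow S P t x y)"
    using assms(3)
  proof (induction rule: tranclp_induct)
    case (base y)
    then show ?case
      using kpow_one[OF assms(1), of y P x] by (auto simp: kedge_def intro!: exI[of _ 1])
  next
    case (step y z)
    then obtain t where "1 \<le> t" "0 < kpow S P t x y" "y \<in> S" "z \<in> S" "0 < P y z"
      by (auto simp: kedge_def)
    then have "0 < kpow S P t x y * kpow S P 1 y z"
      using kpow_one[OF assms(1)] by simp
    also have "\<dots> \<le> kpow S P (t + 1) x z"
      by (rule kpow_ge_mult) (use assms \<open>x \<in> S\<close> \<open>y \<in> S\<close> \<open>z \<in> S\<close> in auto)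
    finally show ?case using \<open>z \<in> S\<close> by auto
  qed
  then show ?thesis by blast
qed

lemma kpow_pos_shift:
  assumes "finite S" "\<forall>x\<in>S. \<forall>y\<in>S. 0 \<le> P x y" "\<forall>x\<in>S. 0 < P x x"
    and "x \<in> S" "y \<in> S" "0 < kpow S P t x y"
  shows "0 < kpow S P (d + t) x y"
proof (induction d)
  case (Suc d)
  have "0 < kpow S P 1 x x * kpow S P (d + t) x y"
    using Suc assms kpow_one[OF assms(1)] by simp
  also have "\<dots> \<le> kpow S P (Suc d + t) x y"
    using kpow_ge_mult[OF assms(1,2,4,5,4), of 1 "d + t"] by simp
  finally show ?case .
qed (use assms in simp)

lemma kpow_pos_eventually:
  assumes "finite S" "\<forall>x\<in>S. \<forall>y\<in>S. 0 \<le> P x y" "\<forall>x\<in>S. 0 < P x x"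
    and "\<forall>x\<in>S. \<forall>y\<in>S. (kedge S P)\<^sup>*\<^sup>* x y"
  obtains m where "1 \<le> m" "\<And>t x y. m \<le> t \<Longrightarrow> x \<in> S \<Longrightarrow> y \<in> S \<Longrightarrow> 0 < kpow S P t x y"
proof -
  have "\<exists>t. 0 < kpow S P t x y" if "x \<in> S" "y \<in> S" for x y
  proof (cases "x = y")
    case True
    then show ?thesis by (auto intro!: exI[of _ 0])
  next
    case False
    then have "(kedge S P)\<^sup>+\<^sup>+ x y"
      using assms(4) that by (auto dest: rtranclpD)
    then show ?thesis using kpow_pos_if_tranclp_kedge[OF assms(1,2)] by blast
  qed
  then obtain T where T: "\<And>x y. x \<in> S \<Longrightarrow> y \<in> S \<Longrightarrow> 0 < kpow S P (T x y) x y"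
    by metis
  define m where "m = Max ((\<lambda>(x, y). T x y) ` (S \<times> S)) + 1"
  have "0 < kpow S P t x y" if "m \<le> t" "x \<in> S" "y \<in> S" for t x y
  proof -
    have "T x y \<le> Max ((\<lambda>(x, y). T x y) ` (S \<times> S))"
      using assms(1) that by (intro Max_ge) auto
    then have "T x y \<le> t"
      using that(1) by (simp add: m_def)
    then show ?thesis
      using kpow_pos_shift[OF assms(1-3) that(2,3) T[OF that(2,3)], of "t - T x y"] by simp
  qed
  then show ?thesis using that[of m] by (simp add: m_def)
qed

lemma aperiodic_if_kpow_pos:
  assumes "1 \<le> m" "\<forall>x\<in>S. 0 < kpow S P m x x \<and> 0 < kpow S P (Suc m) x x"
  shows "aperiodic_kernel S P"
  unfolding aperiodic_kernel_def
proof
  fix x assume "x \<in> S"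
  define G where "G = Gcd {t. 1 \<le> t \<and> 0 < kpow S P t x x}"
  have "G dvd m" "G dvd Suc m"
    unfolding G_def using assms \<open>x \<in> S\<close> by (auto intro: Gcd_dvd)
  then have "G dvd Suc m - m" by (rule dvd_diff_nat[rotated])
  then show "G = 1" by simp
qed

section \<open>Geometric mixtures of kernel powers\<close>

declare kpow.simps(2) [simp del]

lemma geom_pmf_Suc_pos: "0 < q \<Longrightarrow> q < 1 \<Longrightarrow> 0 < geom_pmf q (Suc j)"
  by (simp add: geom_pmf_def)

lemma geom_pmf_Suc_sums: "0 < q \<Longrightarrow> q < 1 \<Longrightarrow> (\<lambda>j. geom_pmf q (Suc j)) sums 1"
  using sums_mult2[OF geometric_sums[of "1 - q"], of q] by (simp add: geom_pmf_def)

definition geom_mixture :: "'s set \<Rightarrow> ('s \<Rightarrow> 's \<Rightarrow> real) \<Rightarrow> real \<Rightarrow> 's \<Rightarrow> 's \<Rightarrow> real" where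
  "geom_mixture S P q x y = (\<Sum>j. geom_pmf q (Suc j) * kpow S P (Suc j) x y)"

context
  fixes S :: "'s set" and P :: "'s \<Rightarrow> 's \<Rightarrow> real" and q :: real
  assumes finite: "finite S" and stochastic: "stochastic_kernel S P"
    and q_pos: "0 < q" and q_less_1: "q < 1"
begin

lemma geom_mixture_term_bounds:
  assumes "x \<in> S" "y \<in> S"
  shows "0 \<le> geom_pmf q (Suc j) * kpow S P (Suc j) x y"
    and "geom_pmf q (Suc j) * kpow S P (Suc j) x y \<le> geom_pmf q (Suc j)"
proof -
  have "0 \<le> kpow S P (Suc j) x y" "kpow S P (Suc j) x y \<le> 1"
    using stochastic_kpow[OF finite stochastic] assms
    by (auto intro: stochastic_kernel_nonneg stochastic_kernel_le_one[OF finite])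
  moreover have "0 < geom_pmf q (Suc j)"
    by (rule geom_pmf_Suc_pos[OF q_pos q_less_1])
  ultimately show "0 \<le> geom_pmf q (Suc j) * kpow S P (Suc j) x y"
    and "geom_pmf q (Suc j) * kpow S P (Suc j) x y \<le> geom_pmf q (Suc j)"
    by (simp_all add: mult_left_le)
qed

lemma summable_geom_mixture:
  assumes "x \<in> S" "y \<in> S"
  shows "summable (\<lambda>j. geom_pmf q (Suc j) * kpow S P (Suc j) x y)"
proof (rule summable_comparison_test)
  show "summable (\<lambda>j. geom_pmf q (Suc j))"
    using geom_pmf_Suc_sums[OF q_pos q_less_1] by (rule sums_summable)
  show "\<exists>N. \<forall>j\<ge>N. norm (geom_pmf q (Suc j) * kpow S P (Suc j) x y) \<le> geom_pmf q (Suc j)"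
    using geom_mixture_term_bounds[OF assms] by auto
qed

lemma stochastic_geom_mixture: "stochastic_kernel S (geom_mixture S P q)"
  unfolding stochastic_kernel_def
proof safe
  fix x y assume "x \<in> S" "y \<in> S"
  then show "0 \<le> geom_mixture S P q x y"
    unfolding geom_mixture_def
    by (intro suminf_nonneg summable_geom_mixture geom_mixture_term_bounds)
next
  fix x assume x: "x \<in> S"
  have "(\<Sum>y\<in>S. geom_mixture S P q x y) = (\<Sum>j. \<Sum>y\<in>S. geom_pmf q (Suc j) * kpow S P (Suc j) x y)"
    unfolding geom_mixture_def using summable_geom_mixture[OF x] by (simp add: suminf_sum)
  also have "\<dots> = (\<Sum>j. geom_pmf q (Suc j))"
    using stochastic_kpow[OF finite stochastic] x
    by (simp add: stochastic_kernel_row_sum flip: sum_distrib_left)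
  also have "\<dots> = 1"
    using geom_pmf_Suc_sums[OF q_pos q_less_1] by (simp add: sums_iff)
  finally show "(\<Sum>y\<in>S. geom_mixture S P q x y) = 1" .
qed

lemma invariant_geom_mixture:
  assumes "invariant_kernel S P \<mu>"
  shows "invariant_kernel S (geom_mixture S P q) \<mu>"
  unfolding invariant_kernel_def
proof
  fix y assume y: "y \<in> S"
  have "(\<Sum>x\<in>S. \<mu> x * geom_mixture S P q x y)
      = (\<Sum>j. \<Sum>x\<in>S. geom_pmf q (Suc j) * (\<mu> x * kpow S P (Suc j) x y))"
    unfolding geom_mixture_def using summable_geom_mixture[OF _ y]
    by (simp add: suminf_sum summable_mult algebra_simps flip: suminf_mult)
  also have "\<dots> = (\<Sum>j. geom_pmf q (Suc j) * \<mu> y)"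
    using invariant_kpow[OF finite assms] y by (simp add: invariant_kernel_def flip: sum_distrib_left)
  also have "\<dots> = \<mu> y"
    using geom_pmf_Suc_sums[OF q_pos q_less_1] by (simp add: sums_iff flip: suminf_mult2)
  finally show "(\<Sum>x\<in>S. \<mu> x * geom_mixture S P q x y) = \<mu> y" .
qed

lemma geom_mixture_pos:
  assumes "x \<in> S" "y \<in> S" "1 \<le> t" "0 < kpow S P t x y"
  shows "0 < geom_mixture S P q x y"
proof -
  obtain j where "t = Suc j" using assms(3) by (cases t) auto
  then have "0 < geom_pmf q (Suc j) * kpow S P (Suc j) x y"
    using assms(4) geom_pmf_Suc_pos[OF q_pos q_less_1] by simp
  with geom_mixture_term_bounds(1)[OF assms(1,2)] show ?thesis
    unfolding geom_mixture_def using suminf_pos_iff[OF summable_geom_mixture[OF assms(1,2)]] by blast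
qed

end

lemma geom_mixture_eq_0: "(\<And>t. kpow S P t x y = 0) \<Longrightarrow> geom_mixture S P q x y = 0"
  by (simp add: geom_mixture_def)

lemma pairsK_memD: "p \<in> pairsK K \<Longrightarrow> 1 \<le> fst p \<and> fst p < snd p \<and> snd p \<le> K"
  by (auto simp: pairsK_def)

lemma finite_pairsK: "finite (pairsK K)"
  by (rule finite_subset[of _ "{1..K} \<times> {1..K}"]) (auto simp: pairsK_def)

lemma card_pairsK: "real (card (pairsK K)) = real K * (real K - 1) / 2"
proof (induction K)
  case 0
  have "pairsK 0 = {}" by (auto simp: pairsK_def)
  then show ?case by simp
next
  case (Suc K)
  have "pairsK (Suc K) = pairsK K \<union> (\<lambda>k. (k, Suc K)) ` {1..K}"
    by (auto simp: pairsK_def)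
  moreover have "pairsK K \<inter> (\<lambda>k. (k, Suc K)) ` {1..K} = {}"
    by (auto simp: pairsK_def)
  ultimately have "card (pairsK (Suc K)) = card (pairsK K) + K"
    using finite_pairsK by (simp add: card_Un_disjoint card_image inj_on_def)
  then show ?case using Suc by (simp add: field_simps)
qed

lemma finite_configs: "finite (configs K n)"
  unfolding configs_def by (intro finite_PiE) auto

lemma finite_velos: "finite (velos K)"
  unfolding velos_def by (intro finite_PiE finite_pairsK) auto

lemma finite_states: "finite (states K n)"
  unfolding states_def using finite_configs finite_velos by simp

lemma card_velos: "card (velos K) = 2 ^ card (pairsK K)"
  unfolding velos_def by (simp add: card_PiE finite_pairsK numeral_2_eq_2)

lemma mem_states_iff [simp]: "(c, v) \<in> states K n \<longleftrightarrow> c \<in> configs K n \<and> v \<in> velos K"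
  by (simp add: states_def)

lemma configs_range: "c \<in> configs K n \<Longrightarrow> i < n \<Longrightarrow> c i \<in> {1..K}"
  unfolding configs_def by auto

lemma fun_upd_in_configs: "c \<in> configs K n \<Longrightarrow> i < n \<Longrightarrow> k \<in> {1..K} \<Longrightarrow> c(i := k) \<in> configs K n"
  unfolding configs_def by (auto simp: PiE_def extensional_def)

lemma override_on_in_configs:
  "c \<in> configs K n \<Longrightarrow> A \<subseteq> {..<n} \<Longrightarrow> k \<in> {1..K} \<Longrightarrow> override_on c (\<lambda>_. k) A \<in> configs K n"
  unfolding configs_def override_on_def by (auto simp: PiE_def extensional_def Pi_def)

lemma velos_range: "v \<in> velos K \<Longrightarrow> p \<in> pairsK K \<Longrightarrow> v p = 1 \<or> v p = -1"
  unfolding velos_def by auto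

lemma flipv_in_velos: "p \<in> pairsK K \<Longrightarrow> v \<in> velos K \<Longrightarrow> flipv p v \<in> velos K"
  unfolding velos_def flipv_def by (auto simp: PiE_def extensional_def Pi_def)

lemma flipv_flipv [simp]: "flipv p (flipv p v) = v"
  unfolding flipv_def by auto

lemma flipv_same [simp]: "flipv p v p = - v p"
  unfolding flipv_def by auto

lemma cnt_pos: "j < n \<Longrightarrow> c j = a \<Longrightarrow> 0 < cnt n c a"
  unfolding cnt_def by (subst card_gt_0_iff) auto

lemma cnt_fun_upd:
  assumes "j < n" "c j = a" "a \<noteq> b"
  shows "cnt n (c(j := b)) a + 1 = cnt n c a"
    and "cnt n (c(j := b)) b = cnt n c b + 1"
    and "k \<noteq> a \<Longrightarrow> k \<noteq> b \<Longrightarrow> cnt n (c(j := b)) k = cnt n c k"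
proof -
  let ?A = "{i. i < n \<and> c i = a}"
  have "{i. i < n \<and> (c(j := b)) i = a} = ?A - {j}" "j \<in> ?A"
    using assms by auto
  moreover have "card (?A - {j}) + 1 = card ?A" if "j \<in> ?A"
    using card_Suc_Diff1[of ?A j] that by simp
  ultimately show "cnt n (c(j := b)) a + 1 = cnt n c a"
    unfolding cnt_def by simp
  have "{i. i < n \<and> (c(j := b)) i = b} = insert j {i. i < n \<and> c i = b}"
    and "j \<notin> {i. i < n \<and> c i = b}"
    using assms by auto
  then show "cnt n (c(j := b)) b = cnt n c b + 1"
    unfolding cnt_def by simp
  show "cnt n (c(j := b)) k = cnt n c k" if "k \<noteq> a" "k \<noteq> b"
  proof -
    have "{i. i < n \<and> (c(j := b)) i = k} = {i. i < n \<and> c i = k}"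
      using that assms by auto
    then show ?thesis unfolding cnt_def by simp
  qed
qed

definition flip_state :: "nat \<times> nat \<Rightarrow> state \<Rightarrow> state" where
  "flip_state p x = (fst x, flipv p (snd x))"

lemma flip_state_flip_state [simp]: "flip_state p (flip_state p x) = x"
  by (simp add: flip_state_def)

lemma flip_state_in_states: "p \<in> pairsK K \<Longrightarrow> x \<in> states K n \<Longrightarrow> flip_state p x \<in> states K n"
  by (cases x) (simp add: flip_state_def flipv_in_velos)

lemma sum_flip_state:
  "p \<in> pairsK K \<Longrightarrow> (\<Sum>x\<in>states K n. g (flip_state p x)) = (\<Sum>x\<in>states K n. g x)"
  by (rule sum.reindex_bij_witness[of _ "flip_state p" "flip_state p"]) (auto simp: flip_state_in_states)

lemma pi_tilde_flip_state [simp]: "pi_tilde \<pi> K (flip_state p x) = pi_tilde \<pi> K x"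
  by (simp add: pi_tilde_def flip_state_def)

definition kminus :: "nat \<times> nat \<Rightarrow> velo \<Rightarrow> nat" where
  "kminus p v = (if v p = 1 then fst p else snd p)"

definition kplus :: "nat \<times> nat \<Rightarrow> velo \<Rightarrow> nat" where
  "kplus p v = (if v p = 1 then snd p else fst p)"

lemma kminus_flipv: "p \<in> pairsK K \<Longrightarrow> v \<in> velos K \<Longrightarrow> kminus p (flipv p v) = kplus p v"
  using velos_range[of v K p] by (auto simp: kminus_def kplus_def)

lemma kplus_flipv: "p \<in> pairsK K \<Longrightarrow> v \<in> velos K \<Longrightarrow> kplus p (flipv p v) = kminus p v"
  using velos_range[of v K p] by (auto simp: kminus_def kplus_def)

lemma kminus_ne_kplus: "p \<in> pairsK K \<Longrightarrow> kminus p v \<noteq> kplus p v"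
  using pairsK_memD[of p K] by (auto simp: kminus_def kplus_def)

lemma kminus_in_pair: "kminus p v \<in> {fst p, snd p}"
  by (simp add: kminus_def)

lemma kplus_in_pair: "kplus p v \<in> {fst p, snd p}"
  by (simp add: kplus_def)

lemma kminus_kplus_range: "p \<in> pairsK K \<Longrightarrow> kminus p v \<in> {1..K} \<and> kplus p v \<in> {1..K}"
  using pairsK_memD[of p K] by (auto simp: kminus_def kplus_def)

section \<open>The move kernel\<close>

lemma sum_point_masses:
  assumes "finite S" "A \<in> S" "B \<in> S"
  shows "(\<Sum>y\<in>S. a * (if y = A then 1 else 0) + b * (if y = B then 1 else 0)) = (a + b :: real)"
  using assms by (simp add: sum.distrib mult_delta_right)

(* The Metropolis identity: both sides equal min (a / N) (b / N'). *)
lemma min_one_balance: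
  fixes a b N N' :: real
  assumes "0 \<le> a" "0 \<le> b" "0 < N" "0 < N'"
  shows "a * min 1 (N / N' * (b / a)) / N = b * min 1 (N' / N * (a / b)) / N'"
  using assms by (cases "a = 0"; cases "b = 0") (auto simp: min_def field_simps)

lemma move_kernel_eq:
  "move_kernel \<pi> K n p (c, v) y =
    (if cnt n c (kminus p v) = 0 then (if y = (c, flipv p v) then 1 else 0)
     else (\<Sum>i | i < n \<and> c i = kminus p v. 1 / real (cnt n c (kminus p v)) *
       (min 1 (ratio \<pi> K n c i (kminus p v) (kplus p v)) * (if y = (c(i := kplus p v), v) then 1 else 0)
        + (1 - min 1 (ratio \<pi> K n c i (kminus p v) (kplus p v))) * (if y = (c, flipv p v) then 1 else 0))))"
  by (cases "v p = 1"; cases p) (simp_all add: move_kernel_def kminus_def kplus_def Let_def)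

lemma move_kernel_support:
  assumes "move_kernel \<pi> K n p (c, v) y \<noteq> 0"
  shows "y = (c, flipv p v) \<or> (\<exists>j<n. c j = kminus p v \<and> y = (c(j := kplus p v), v))"
proof (cases "cnt n c (kminus p v) = 0")
  case False
  then obtain i where "i < n" "c i = kminus p v"
    "min 1 (ratio \<pi> K n c i (kminus p v) (kplus p v)) * (if y = (c(i := kplus p v), v) then 1 else 0)
     + (1 - min 1 (ratio \<pi> K n c i (kminus p v) (kplus p v))) * (if y = (c, flipv p v) then 1 else 0) \<noteq> 0"
    using assms unfolding move_kernel_eq
    by (auto elim: sum.not_neutral_contains_not_neutral)
  then show ?thesis by (auto split: if_splits)
qed (use assms in \<open>simp add: move_kernel_eq split: if_splits\<close>)

lemma move_kernel_accept:
  assumes "p \<in> pairsK K" "j < n" "c j = kminus p v"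
  shows "move_kernel \<pi> K n p (c, v) (c(j := kplus p v), v)
    = min 1 (ratio \<pi> K n c j (kminus p v) (kplus p v)) / real (cnt n c (kminus p v))"
proof -
  have ne: "kminus p v \<noteq> kplus p v" by (rule kminus_ne_kplus[OF assms(1)])
  then have not_rej: "c(j := kplus p v) \<noteq> c" using assms(3) by (metis fun_upd_same)
  have "c(j := kplus p v) = c(i := kplus p v) \<longleftrightarrow> i = j" if "c i = kminus p v" for i
    using that assms(3) ne by (metis fun_upd_apply)
  then show ?thesis
    using cnt_pos[of j n c "kminus p v"] assms(2,3) not_rej
    by (simp add: move_kernel_eq if_distrib[of "\<lambda>t. _ * t"] cong: if_cong)
qed

lemma move_kernel_flip_support:
  assumes "p \<in> pairsK K" "v' \<in> velos K" "move_kernel \<pi> K n p (c', flipv p v') (c, flipv p v) \<noteq> 0"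
  shows "(c', v') = (c, flipv p v) \<or> (\<exists>j<n. c j = kminus p v \<and> (c', v') = (c(j := kplus p v), v))"
  using move_kernel_support[OF assms(3)]
proof
  assume "\<exists>j<n. c' j = kminus p (flipv p v') \<and> (c, flipv p v) = (c'(j := kplus p (flipv p v')), flipv p v')"
  then obtain j where j: "j < n" "c' j = kminus p (flipv p v')"
    and c: "c = c'(j := kplus p (flipv p v'))" and "flipv p v = flipv p v'"
    by auto
  then have "v = v'" by (metis flipv_flipv)
  with j c have "c j = kminus p v" "c' = c(j := kplus p v)"
    using kminus_flipv[OF assms(1,2)] kplus_flipv[OF assms(1,2)] by auto
  then show ?thesis using j(1) \<open>v = v'\<close> by auto
qed auto

locale nr_sampler =
  fixes \<pi> :: "config \<Rightarrow> real" and K n :: nat and \<xi> s :: real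
  assumes K_ge_2: "2 \<le> K" and n_pos: "1 \<le> n"
    and pi_nonneg: "\<forall>c\<in>configs K n. 0 \<le> \<pi> c" and pi_sum: "(\<Sum>c\<in>configs K n. \<pi> c) = 1"
    and xi_nonneg: "0 \<le> \<xi>" and xi_le_n: "\<xi> \<le> real n"
    and s_pos: "0 < s" and s_less_1: "s < 1"
begin

abbreviation "S \<equiv> states K n"
abbreviation "M p \<equiv> move_kernel \<pi> K n p"
abbreviation "\<mu> \<equiv> pi_tilde \<pi> K"

lemma ratio_nonneg:
  assumes "c \<in> configs K n" "i < n" "a \<in> {1..K}" "b \<in> {1..K}"
  shows "0 \<le> ratio \<pi> K n c i a b"
proof -
  have "0 \<le> condp \<pi> K c i k" if "k \<in> {1..K}" for k
    using pi_nonneg fun_upd_in_configs[OF assms(1,2)] that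
    unfolding condp_def by (auto intro!: divide_nonneg_nonneg sum_nonneg)
  then show ?thesis
    using assms(3,4) unfolding ratio_def by (auto intro!: mult_nonneg_nonneg divide_nonneg_nonneg)
qed

lemma move_kernel_nonneg:
  assumes "p \<in> pairsK K" "(c, v) \<in> S"
  shows "0 \<le> M p (c, v) y"
proof -
  have "0 \<le> ratio \<pi> K n c i (kminus p v) (kplus p v)" if "i < n" for i
    using assms kminus_kplus_range[OF assms(1)] that by (auto intro!: ratio_nonneg)
  then show ?thesis
    unfolding move_kernel_eq by (auto intro!: sum_nonneg add_nonneg_nonneg mult_nonneg_nonneg)
qed

lemma move_kernel_row_sum:
  assumes p: "p \<in> pairsK K" and x: "(c, v) \<in> S"
  shows "(\<Sum>y\<in>S. M p (c, v) y) = 1"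
proof (cases "cnt n c (kminus p v) = 0")
  case True
  then show ?thesis
    using x flipv_in_velos[OF p] finite_states by (simp add: move_kernel_eq)
next
  case False
  define N where "N = cnt n c (kminus p v)"
  have rej: "(c, flipv p v) \<in> S"
    using x flipv_in_velos[OF p] by auto
  have acc: "(c(i := kplus p v), v) \<in> S" if "i < n" for i
    using x that fun_upd_in_configs kminus_kplus_range[OF p] by auto
  have "(\<Sum>y\<in>S. M p (c, v) y)
    = (\<Sum>i | i < n \<and> c i = kminus p v. 1 / real N * (\<Sum>y\<in>S.
         min 1 (ratio \<pi> K n c i (kminus p v) (kplus p v)) * (if y = (c(i := kplus p v), v) then 1 else 0)
         + (1 - min 1 (ratio \<pi> K n c i (kminus p v) (kplus p v))) * (if y = (c, flipv p v) then 1 else 0)))"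
    unfolding move_kernel_eq N_def using False by (simp add: sum.swap[of _ S] sum_distrib_left)
  also have "\<dots> = (\<Sum>i | i < n \<and> c i = kminus p v. 1 / real N)"
    by (intro sum.cong refl) (simp add: sum_point_masses[OF finite_states acc rej])
  also have "\<dots> = 1"
    using False by (simp add: N_def cnt_def)
  finally show ?thesis .
qed

lemma stochastic_move_kernel:
  assumes "p \<in> pairsK K"
  shows "stochastic_kernel S (M p)"
  unfolding stochastic_kernel_def
proof (intro conjI ballI)
  fix x y assume "x \<in> S"
  then show "0 \<le> M p x y" "(\<Sum>y\<in>S. M p x y) = 1"
    using move_kernel_nonneg[OF assms] move_kernel_row_sum[OF assms] by (cases x; simp)+
qed

lemma ratio_fun_upd:
  assumes c: "c \<in> configs K n" and j: "j < n" "c j = a" and b: "a \<noteq> b" "b \<in> {1..K}"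
  shows "ratio \<pi> K n c j a b = real (cnt n c a) / real (cnt n (c(j := b)) b) * (\<pi> (c(j := b)) / \<pi> c)"
proof -
  define Z where "Z = (\<Sum>l\<in>{1..K}. \<pi> (c(j := l)))"
  have "c(j := a) = c" using j by auto
  moreover have "a \<in> {1..K}" using configs_range[OF c j(1)] j by simp
  then have "\<pi> (c(j := a)) \<le> Z"
    unfolding Z_def by (rule member_le_sum) (use pi_nonneg fun_upd_in_configs[OF c j(1)] in auto)
  ultimately have "\<pi> c \<le> Z"
    by simp
  moreover have "0 \<le> \<pi> c" using pi_nonneg c by simp
  ultimately have quotient: "\<pi> (c(j := b)) / Z / (\<pi> c / Z) = \<pi> (c(j := b)) / \<pi> c"
    by (cases "Z = 0") auto
  have condp_b: "condp \<pi> K c j b = \<pi> (c(j := b)) / Z"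
    and condp_a: "condp \<pi> K c j a = \<pi> c / Z"
    using \<open>c(j := a) = c\<close> by (simp_all add: condp_def Z_def)
  have cnt_b: "real (cnt n c b) + 1 = real (cnt n (c(j := b)) b)"
    using cnt_fun_upd(2)[of j n c a b] j b by simp
  show ?thesis
    unfolding ratio_def condp_a condp_b cnt_b quotient ..
qed

lemma move_kernel_accept_balance:
  assumes p: "p \<in> pairsK K" and x: "(c, v) \<in> S" and j: "j < n" "c j = kminus p v"
  shows "\<pi> c * M p (c, v) (c(j := kplus p v), v)
       = \<pi> (c(j := kplus p v)) * M p (c(j := kplus p v), flipv p v) (c, flipv p v)"
proof -
  define a b c' where "a = kminus p v" and "b = kplus p v" and "c' = c(j := b)"
  have ab: "a \<noteq> b" "b \<in> {1..K}"
    using kminus_ne_kplus[OF p] kminus_kplus_range[OF p] by (auto simp: a_def b_def)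
  have c': "c' \<in> configs K n" "c' j = b" "c'(j := a) = c"
    using x j fun_upd_in_configs[of c K n j b] ab by (auto simp: c'_def a_def)
  have flip: "kminus p (flipv p v) = b" "kplus p (flipv p v) = a"
    using x kminus_flipv[OF p] kplus_flipv[OF p] by (auto simp: a_def b_def)
  have "M p (c, v) (c', v) = min 1 (ratio \<pi> K n c j a b) / real (cnt n c a)"
    using move_kernel_accept[of p K j n c v \<pi>] p j by (simp add: a_def b_def c'_def)
  moreover have "M p (c', flipv p v) (c, flipv p v) = min 1 (ratio \<pi> K n c' j b a) / real (cnt n c' b)"
    using move_kernel_accept[of p K j n c' "flipv p v" \<pi>] p j c' flip by simp
  moreover have "ratio \<pi> K n c j a b = real (cnt n c a) / real (cnt n c' b) * (\<pi> c' / \<pi> c)"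
    using ratio_fun_upd[of c j a b] x j ab by (simp add: a_def c'_def)
  moreover have "ratio \<pi> K n c' j b a = real (cnt n c' b) / real (cnt n c a) * (\<pi> c / \<pi> c')"
    using ratio_fun_upd[of c' j b a] c' j ab configs_range[of c K n j] x by (auto simp: a_def)
  moreover have "0 < real (cnt n c a)" "0 < real (cnt n c' b)"
    using cnt_pos[of j n c a] cnt_pos[of j n c' b] j c' by (auto simp: a_def)
  moreover have "0 \<le> \<pi> c" "0 \<le> \<pi> c'"
    using pi_nonneg x c' by auto
  ultimately show ?thesis
    using min_one_balance[of "\<pi> c" "\<pi> c'" "real (cnt n c a)" "real (cnt n c' b)"]
    by (simp add: a_def b_def c'_def)
qed

lemma move_kernel_skew_balance:
  assumes p: "p \<in> pairsK K" and x: "(c, v) \<in> S" and y: "(c', v') \<in> S"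
  shows "\<pi> c * M p (c, v) (c', v') = \<pi> c' * M p (c', flipv p v') (c, flipv p v)"
proof -
  consider (reject) "(c', v') = (c, flipv p v)"
    | (accept) j where "j < n" "c j = kminus p v" "(c', v') = (c(j := kplus p v), v)"
    | (neither) "M p (c, v) (c', v') = 0" "M p (c', flipv p v') (c, flipv p v) = 0"
    using move_kernel_support[of \<pi> K n p c v "(c', v')"]
      move_kernel_flip_support[OF p _, of v' \<pi> n c' c v] y by auto
  then show ?thesis
  proof cases
    case accept
    then show ?thesis using move_kernel_accept_balance[OF p x accept(1,2)] by simp
  qed simp_all
qed

lemma invariant_move_kernel:
  assumes p: "p \<in> pairsK K"
  shows "invariant_kernel S (M p) \<mu>"
  unfolding invariant_kernel_def
proof
  fix y assume y: "y \<in> S"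
  have "\<mu> x * M p x y = \<mu> y * M p (flip_state p y) (flip_state p x)" if "x \<in> S" for x
    using move_kernel_skew_balance[OF p, of "fst x" "snd x" "fst y" "snd y"] that y
    by (cases x; cases y) (simp add: pi_tilde_def flip_state_def algebra_simps)
  then have "(\<Sum>x\<in>S. \<mu> x * M p x y) = \<mu> y * (\<Sum>x\<in>S. M p (flip_state p y) (flip_state p x))"
    by (simp add: sum_distrib_left)
  also have "\<dots> = \<mu> y"
    using stochastic_move_kernel[OF p] flip_state_in_states[OF p y]
    by (simp add: sum_flip_state[OF p] stochastic_kernel_row_sum)
  finally show "(\<Sum>x\<in>S. \<mu> x * M p x y) = \<mu> y" .
qed

abbreviation "Phi p \<equiv> flip_kernel \<xi> n p"
abbreviation "PT p \<equiv> Ptilde \<pi> K n \<xi> p"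

lemma flip_kernel_eq:
  "Phi p x y = (1 - \<xi> / n) * (if y = x then 1 else 0) + \<xi> / n * (if y = flip_state p x then 1 else 0)"
  by (simp add: flip_kernel_def flip_state_def)

lemma flip_probability_bounds: "0 \<le> \<xi> / n" "\<xi> / n \<le> 1"
  using xi_nonneg xi_le_n n_pos by auto

lemma stochastic_flip_kernel:
  assumes p: "p \<in> pairsK K"
  shows "stochastic_kernel S (Phi p)"
  unfolding stochastic_kernel_def
proof (intro conjI ballI)
  fix x y assume x: "x \<in> S"
  show "0 \<le> Phi p x y"
    using flip_probability_bounds by (simp add: flip_kernel_eq)
  show "(\<Sum>y\<in>S. Phi p x y) = 1"
    unfolding flip_kernel_eq sum_point_masses[OF finite_states x flip_state_in_states[OF p x]] by simp
qed

lemma invariant_flip_kernel: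
  assumes p: "p \<in> pairsK K"
  shows "invariant_kernel S (Phi p) \<mu>"
  unfolding invariant_kernel_def
proof
  fix y assume y: "y \<in> S"
  have "Phi p x y = (1 - \<xi> / n) * (if x = y then 1 else 0) + \<xi> / n * (if x = flip_state p y then 1 else 0)" for x
    by (auto simp: flip_kernel_eq)
  then show "(\<Sum>x\<in>S. \<mu> x * Phi p x y) = \<mu> y"
    using y flip_state_in_states[OF p y] finite_states
    by (simp add: distrib_left sum.distrib mult.left_commute[of "\<mu> _"] mult_delta_right)
      (simp add: algebra_simps)
qed

lemma stochastic_Ptilde: "p \<in> pairsK K \<Longrightarrow> stochastic_kernel S (PT p)"
  unfolding Ptilde_def by (intro stochastic_kcomp stochastic_flip_kernel stochastic_move_kernel)

lemma invariant_Ptilde: "p \<in> pairsK K \<Longrightarrow> invariant_kernel S (PT p) \<mu>"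
  unfolding Ptilde_def by (intro invariant_kcomp invariant_flip_kernel invariant_move_kernel)

definition pair_count :: "nat \<times> nat \<Rightarrow> config \<Rightarrow> nat" where
  "pair_count p c = cnt n c (fst p) + cnt n c (snd p)"

lemma move_kernel_conserves_pair_count:
  assumes p: "p \<in> pairsK K" and "M p (c, v) y \<noteq> 0"
  shows "pair_count p (fst y) = pair_count p c"
  using move_kernel_support[OF assms(2)]
proof
  assume "\<exists>j<n. c j = kminus p v \<and> y = (c(j := kplus p v), v)"
  then obtain j where j: "j < n" "c j = kminus p v" "y = (c(j := kplus p v), v)"
    by auto
  note cnt = cnt_fun_upd[of j n c "kminus p v" "kplus p v"]
  consider "kminus p v = fst p" "kplus p v = snd p" | "kminus p v = snd p" "kplus p v = fst p"
    by (cases "v p = 1") (simp_all add: kminus_def kplus_def)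
  then show ?thesis
    using cnt j pairsK_memD[OF p] by cases (auto simp: pair_count_def)
qed auto

lemma Ptilde_conserves_pair_count:
  assumes p: "p \<in> pairsK K" and "PT p x y \<noteq> 0"
  shows "pair_count p (fst x) = pair_count p (fst y)"
proof -
  have flip_fst: "fst b = fst a" if "Phi p a b \<noteq> 0" for a b
    using that by (auto simp: flip_kernel_eq flip_state_def split: if_splits)
  obtain w z where "Phi p x z \<noteq> 0" "M p z w \<noteq> 0" "Phi p w y \<noteq> 0"
    using assms(2) unfolding Ptilde_def by (auto elim!: kcomp_nonzeroE)
  moreover have "pair_count p (fst w) = pair_count p (fst z)"
    using move_kernel_conserves_pair_count[OF p, of "fst z" "snd z" w] \<open>M p z w \<noteq> 0\<close> by simp
  ultimately show ?thesis
    using flip_fst by metis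
qed

section \<open>The kernel Q_NR\<close>

definition pair_kernel :: "nat \<times> nat \<Rightarrow> nat \<Rightarrow> state \<Rightarrow> state \<Rightarrow> real" where
  "pair_kernel p N x y = (if N = 0 then kpow S (PT p) 1 x y else geom_mixture S (PT p) (s / N) x y)"

lemma Q_NR_eq:
  "Q_NR \<pi> K n \<xi> s =
     (\<lambda>x y. \<Sum>p\<in>pairsK K. 2 / (real K * (real K - 1)) * pair_kernel p (pair_count p (fst x)) x y)"
  by (intro ext) (simp add: Q_NR_def pair_kernel_def pair_count_def geom_mixture_def Let_def cong: if_cong)

lemma geometric_parameter_bounds: "(N::nat) \<noteq> 0 \<Longrightarrow> 0 < s / N \<and> s / N < 1"
  using s_pos s_less_1 by (auto simp: field_simps)

lemma pair_kernel_eq: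
  "pair_kernel p N = (if N = 0 then kpow S (PT p) 1 else geom_mixture S (PT p) (s / N))"
  by (simp add: pair_kernel_def fun_eq_iff)

lemma stochastic_pair_kernel: "p \<in> pairsK K \<Longrightarrow> stochastic_kernel S (pair_kernel p N)"
  using geometric_parameter_bounds[of N]
  by (simp add: pair_kernel_eq finite_states stochastic_Ptilde stochastic_kpow stochastic_geom_mixture)

lemma invariant_pair_kernel: "p \<in> pairsK K \<Longrightarrow> invariant_kernel S (pair_kernel p N) \<mu>"
  using geometric_parameter_bounds[of N]
  by (simp add: pair_kernel_eq finite_states stochastic_Ptilde invariant_Ptilde invariant_kpow
      invariant_geom_mixture)

lemma pair_kernel_conserves_pair_count:
  assumes p: "p \<in> pairsK K" and x: "x \<in> S" and "pair_kernel p N x y \<noteq> 0"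
  shows "pair_count p (fst x) = pair_count p (fst y)"
proof (rule ccontr)
  assume "pair_count p (fst x) \<noteq> pair_count p (fst y)"
  then have "kpow S (PT p) t x y = 0" for t
    using kpow_nonzero_conserves[of S "PT p" "\<lambda>x. pair_count p (fst x)"] Ptilde_conserves_pair_count[OF p] x
    by blast
  then show False
    using assms(3) by (simp add: pair_kernel_def geom_mixture_eq_0 split: if_splits)
qed

lemma pair_kernel_pos:
  assumes p: "p \<in> pairsK K" and "x \<in> S" "y \<in> S" "1 \<le> t" "0 < kpow S (PT p) t x y"
    and "N = 0 \<Longrightarrow> t = 1"
  shows "0 < pair_kernel p N x y"
proof (cases "N = 0")
  case False
  then show ?thesis
    using assms geometric_parameter_bounds[OF False]
      geom_mixture_pos[OF finite_states stochastic_Ptilde[OF p]]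
    by (simp add: pair_kernel_def)
qed (use assms in \<open>simp add: pair_kernel_def\<close>)

lemma sum_pair_weights: "(\<Sum>p\<in>pairsK K. 2 / (real K * (real K - 1))) = 1"
  using card_pairsK[of K] K_ge_2 by simp

lemma stochastic_Q_NR: "stochastic_kernel S (Q_NR \<pi> K n \<xi> s)"
proof -
  have "stochastic_kernel S (\<lambda>x y. pair_kernel p (pair_count p (fst x)) x y)" if "p \<in> pairsK K" for p
    using stochastic_pair_kernel[OF that] by (rule stochastic_kernel_param)
  then show ?thesis
    unfolding Q_NR_eq using finite_pairsK sum_pair_weights K_ge_2
    by (intro stochastic_kernel_convex) auto
qed

lemma invariant_Q_NR: "invariant_kernel S (Q_NR \<pi> K n \<xi> s) \<mu>"
proof -
  have "invariant_kernel S (\<lambda>x y. pair_kernel p (pair_count p (fst x)) x y) \<mu>" if "p \<in> pairsK K" for p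
    using invariant_pair_kernel[OF that] pair_kernel_conserves_pair_count[OF that]
    by (rule invariant_kernel_conserved_param)
  then show ?thesis
    unfolding Q_NR_eq using finite_pairsK sum_pair_weights
    by (intro invariant_kernel_convex) auto
qed

lemma pi_tilde_nonneg: "\<forall>x\<in>S. 0 \<le> \<mu> x"
  using pi_nonneg by (auto simp: pi_tilde_def states_def)

lemma sum_pi_tilde: "(\<Sum>x\<in>S. \<mu> x) = 1"
proof -
  define C :: real where "C = 2 powr (- (real K * (real K - 1) / 2))"
  have "(\<Sum>x\<in>S. \<mu> x) = (\<Sum>c\<in>configs K n. \<Sum>v\<in>velos K. \<pi> c * C)"
    unfolding states_def by (subst sum.cartesian_product) (simp add: pi_tilde_def C_def case_prod_beta)
  also have "\<dots> = (\<Sum>c\<in>configs K n. \<pi> c) * card (velos K) * C"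
    by (simp add: sum_distrib_left sum_distrib_right mult_ac)
  also have "\<dots> = 2 powr real (card (pairsK K)) * 2 powr (- real (card (pairsK K)))"
    unfolding C_def card_pairsK[symmetric] using pi_sum card_velos by (simp add: powr_realpow)
  also have "\<dots> = 1"
    by (simp flip: powr_add)
  finally show ?thesis .
qed

lemma Q_NR_pos:
  assumes p: "p \<in> pairsK K" and "x \<in> S" "y \<in> S" "1 \<le> t" "0 < kpow S (PT p) t x y"
    and "pair_count p (fst x) = 0 \<Longrightarrow> t = 1"
  shows "0 < Q_NR \<pi> K n \<xi> s x y"
proof -
  have "0 < 2 / (real K * (real K - 1)) * pair_kernel p (pair_count p (fst x)) x y"
    using pair_kernel_pos[OF assms] K_ge_2 by simp
  also have "\<dots> \<le> Q_NR \<pi> K n \<xi> s x y"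
    unfolding Q_NR_eq
  proof (rule member_le_sum[OF p _ finite_pairsK])
    fix q assume "q \<in> pairsK K - {p}"
    then have "0 \<le> pair_kernel q (pair_count q (fst x)) x y"
      using stochastic_kernel_nonneg[OF stochastic_pair_kernel assms(2,3)] by blast
    then show "0 \<le> 2 / (real K * (real K - 1)) * pair_kernel q (pair_count q (fst x)) x y"
      using K_ge_2 by simp
  qed
  finally show ?thesis .
qed

end

section \<open>Connectivity of the transition graph of Q_NR\<close>

locale sweeping =
  fixes K n :: nat and p :: "nat \<times> nat" and P :: "state \<Rightarrow> state \<Rightarrow> real"
    and kfrom kto :: "velo \<Rightarrow> nat"
  assumes pair: "p \<in> pairsK K"
    and kfrom_flipv: "\<And>v. v \<in> velos K \<Longrightarrow> kfrom (flipv p v) = kto v"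
    and kfrom_ne_kto: "\<And>v. v \<in> velos K \<Longrightarrow> kfrom v \<noteq> kto v"
    and kfrom_in_pair: "\<And>v. v \<in> velos K \<Longrightarrow> kfrom v \<in> {fst p, snd p}"
    and move_pos: "\<And>c v i. (c, v) \<in> states K n \<Longrightarrow> i < n \<Longrightarrow> c i = kfrom v \<Longrightarrow>
      0 < P (c, v) (c(i := kto v), v)"
    and turn_pos: "\<And>c v. (c, v) \<in> states K n \<Longrightarrow> cnt n c (kfrom v) = 0 \<Longrightarrow>
      0 < P (c, v) (c, flipv p v)"
begin

abbreviation "R \<equiv> kedge (states K n) P"

lemma kto_flipv: "v \<in> velos K \<Longrightarrow> kto (flipv p v) = kfrom v"
  using kfrom_flipv[OF flipv_in_velos[OF pair]] by simp

lemma kto_in_pair: "v \<in> velos K \<Longrightarrow> kto v \<in> {fst p, snd p}"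
  using kfrom_in_pair[OF flipv_in_velos[OF pair]] kfrom_flipv by simp

lemma pair_range: "k \<in> {fst p, snd p} \<Longrightarrow> k \<in> {1..K}"
  using pairsK_memD[OF pair] by auto

lemma sweep:
  assumes x: "(c, v) \<in> states K n" and A: "A \<subseteq> {i. i < n \<and> c i = kfrom v}"
  shows "R\<^sup>*\<^sup>* (c, v) (override_on c (\<lambda>_. kto v) A, v)"
proof -
  have "finite A" using A by (rule finite_subset) simp
  then show ?thesis using A
  proof (induction A rule: finite_induct)
    case (insert j A)
    let ?c = "override_on c (\<lambda>_. kto v) A"
    have "kto v \<in> {1..K}"
      using x kto_in_pair pair_range by auto
    then have "?c \<in> configs K n"
      using x insert.prems by (intro override_on_in_configs) auto
    then have "(?c, v) \<in> states K n" "(?c(j := kto v), v) \<in> states K n"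
      using x insert.prems \<open>kto v \<in> {1..K}\<close> by (auto intro: fun_upd_in_configs)
    moreover have "?c j = kfrom v"
      using insert by (simp add: override_on_def)
    ultimately have step: "R (?c, v) (?c(j := kto v), v)"
      using move_pos insert.prems by (auto simp: kedge_def)
    have "R\<^sup>*\<^sup>* (c, v) (?c, v)"
      using insert by simp
    then show ?case
      unfolding override_on_insert using step by (rule rtranclp.rtrancl_into_rtrancl)
  qed simp
qed

lemma reaches_flipv:
  assumes x: "(c, v) \<in> states K n"
  shows "R\<^sup>+\<^sup>+ (c, v) (c, flipv p v)"
proof -
  define A where "A = {i. i < n \<and> c i = kfrom v}"
  define c1 where "c1 = override_on c (\<lambda>_. kto v) A"
  have v: "v \<in> velos K" "flipv p v \<in> velos K" and "kfrom v \<noteq> kto v"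
    using x flipv_in_velos[OF pair] kfrom_ne_kto by auto
  have c1: "c1 \<in> configs K n"
    unfolding c1_def A_def using x kto_in_pair[OF v(1)] pair_range
    by (intro override_on_in_configs) auto
  have "R\<^sup>*\<^sup>* (c, v) (c1, v)"
    unfolding c1_def A_def by (rule sweep[OF x]) simp
  moreover have "R (c1, v) (c1, flipv p v)"
  proof -
    have "cnt n c1 (kfrom v) = 0"
      using \<open>kfrom v \<noteq> kto v\<close> by (simp add: cnt_def c1_def A_def override_on_def)
    then show ?thesis
      using turn_pos c1 v by (auto simp: kedge_def)
  qed
  moreover have "R\<^sup>*\<^sup>* (c1, flipv p v) (c, flipv p v)"
  proof -
    have "R\<^sup>*\<^sup>* (c1, flipv p v) (override_on c1 (\<lambda>_. kto (flipv p v)) A, flipv p v)"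
      using c1 v kfrom_flipv kto_flipv
      by (intro sweep) (auto simp: A_def c1_def override_on_def)
    moreover have "override_on c1 (\<lambda>_. kto (flipv p v)) A = c"
      using kto_flipv[OF v(1)] by (auto simp: c1_def A_def override_on_def)
    ultimately show ?thesis by simp
  qed
  ultimately show ?thesis
    by (meson rtranclp_into_tranclp1 tranclp_rtranclp_tranclp)
qed

lemma reaches_self:
  assumes "(c, v) \<in> states K n"
  shows "R\<^sup>+\<^sup>+ (c, v) (c, v)"
  using reaches_flipv[OF assms] reaches_flipv[of c "flipv p v"] assms flipv_in_velos[OF pair]
  by auto

lemma reaches_relabel:
  assumes x: "(c, v) \<in> states K n" and i: "i < n"
    and ci: "c i \<in> {fst p, snd p}" and b: "b \<in> {fst p, snd p}" "b \<noteq> c i"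
  shows "R\<^sup>+\<^sup>+ (c, v) (c(i := b), v)"
proof -
  have v: "v \<in> velos K" "flipv p v \<in> velos K"
    using x flipv_in_velos[OF pair] by auto
  have ci_b: "c i = kfrom v \<and> b = kto v \<or> c i = kto v \<and> b = kfrom v"
    using ci b kfrom_in_pair[OF v(1)] kto_in_pair[OF v(1)] kfrom_ne_kto[OF v(1)] by auto
  have y: "(c(i := b), v) \<in> states K n" "(c(i := b), flipv p v) \<in> states K n"
    using x v fun_upd_in_configs[OF _ i pair_range[OF b(1)]] by auto
  show ?thesis
  proof (cases "c i = kfrom v")
    case True
    then show ?thesis
      using move_pos[OF x i] ci_b x y by (auto simp: kedge_def)
  next
    case False
    then have "R (c, flipv p v) (c(i := b), flipv p v)"
      using move_pos[of c "flipv p v" i] ci_b x v y i kfrom_flipv kto_flipv by (auto simp: kedge_def)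
    then show ?thesis
      using reaches_flipv[OF x] reaches_flipv[OF y(2)] by (auto intro: tranclp_trans)
  qed
qed

end

context nr_sampler
begin

lemma Ptilde_pos_if_path:
  assumes p: "p \<in> pairsK K" and "x \<in> S" "y \<in> S" "z \<in> S" "w \<in> S"
    and "0 < Phi p x z" "0 < M p z w" "0 < Phi p w y"
  shows "0 < PT p x y"
proof -
  have "0 < Phi p x z * M p z w * Phi p w y"
    using assms(6-8) by simp
  also have "\<dots> \<le> kcomp S (Phi p) (M p) x w * Phi p w y"
    using assms stochastic_flip_kernel[OF p] stochastic_move_kernel[OF p]
    by (intro mult_right_mono kcomp_ge_mult finite_states) (auto intro: stochastic_kernel_nonneg)
  also have "\<dots> \<le> PT p x y"
    unfolding Ptilde_def using assms stochastic_flip_kernel[OF p] stochastic_move_kernel[OF p]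
    by (intro kcomp_ge_mult finite_states stochastic_kcomp)
  finally show ?thesis .
qed

lemma flip_kernel_stay: "\<xi> / n < 1 \<Longrightarrow> 0 < Phi p x x"
  using flip_probability_bounds by (simp add: flip_kernel_eq)

lemma flip_kernel_flip: "0 < \<xi> / n \<Longrightarrow> 0 < Phi p x (flip_state p x)"
  using flip_probability_bounds by (auto simp: flip_kernel_eq flip_state_def)

lemma move_kernel_turn: "cnt n c (kminus p v) = 0 \<Longrightarrow> M p (c, v) (c, flipv p v) = 1"
  by (simp add: move_kernel_eq)

lemma pair_count_pos: "i < n \<Longrightarrow> c i \<in> {fst p, snd p} \<Longrightarrow> pair_count p c \<noteq> 0"
  unfolding pair_count_def using cnt_pos[of i n c] by auto

end

locale nr_sampler_pos = nr_sampler +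
  assumes pi_pos: "\<forall>c\<in>configs K n. 0 < \<pi> c"
begin

abbreviation "Q \<equiv> Q_NR \<pi> K n \<xi> s"

lemma move_kernel_accept_pos:
  assumes p: "p \<in> pairsK K" and x: "(c, v) \<in> S" and j: "j < n" "c j = kminus p v"
  shows "0 < M p (c, v) (c(j := kplus p v), v)"
proof -
  have ab: "kminus p v \<noteq> kplus p v" "kplus p v \<in> {1..K}"
    using kminus_ne_kplus[OF p] kminus_kplus_range[OF p] by auto
  then have "0 < \<pi> c" "0 < \<pi> (c(j := kplus p v))"
    using pi_pos x fun_upd_in_configs[OF _ j(1)] by auto
  moreover have "0 < cnt n c (kminus p v)" "0 < cnt n (c(j := kplus p v)) (kplus p v)"
    using cnt_pos[of j n c] cnt_pos[of j n "c(j := kplus p v)"] j by auto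
  ultimately have "0 < ratio \<pi> K n c j (kminus p v) (kplus p v)"
    using ratio_fun_upd[of c j "kminus p v" "kplus p v"] x j ab by simp
  then show ?thesis
    using move_kernel_accept[of p K j n c v \<pi>] p j cnt_pos[of j n c] by simp
qed

lemma sweeping_Ptilde_kminus_kplus:
  assumes p: "p \<in> pairsK K" and stay: "\<xi> / n < 1"
  shows "sweeping K n p (PT p) (kminus p) (kplus p)"
proof
  show "p \<in> pairsK K" by (rule p)
  fix v assume "v \<in> velos K"
  then show "kminus p (flipv p v) = kplus p v" "kminus p v \<noteq> kplus p v" "kminus p v \<in> {fst p, snd p}"
    using kminus_flipv[OF p] kminus_ne_kplus[OF p] kminus_in_pair by auto
next
  fix c v i assume x: "(c, v) \<in> S" and i: "i < n" "c i = kminus p v"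
  then have "(c(i := kplus p v), v) \<in> S"
    using fun_upd_in_configs kminus_kplus_range[OF p] by auto
  then show "0 < PT p (c, v) (c(i := kplus p v), v)"
    using Ptilde_pos_if_path[OF p x _ x] move_kernel_accept_pos[OF p x i] flip_kernel_stay[OF stay]
    by blast
next
  fix c v assume x: "(c, v) \<in> S" and "cnt n c (kminus p v) = 0"
  moreover have y: "(c, flipv p v) \<in> S"
    using x flipv_in_velos[OF p] by simp
  ultimately show "0 < PT p (c, v) (c, flipv p v)"
    using Ptilde_pos_if_path[OF p x y x y] move_kernel_turn flip_kernel_stay[OF stay] by simp
qed

lemma sweeping_Ptilde_kplus_kminus:
  assumes p: "p \<in> pairsK K" and flip: "0 < \<xi> / n"
  shows "sweeping K n p (PT p) (kplus p) (kminus p)"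
proof
  show "p \<in> pairsK K" by (rule p)
  fix v assume "v \<in> velos K"
  then show "kplus p (flipv p v) = kminus p v" "kplus p v \<noteq> kminus p v" "kplus p v \<in> {fst p, snd p}"
    using kplus_flipv[OF p] kminus_ne_kplus[OF p, of v] kplus_in_pair by auto
next
  fix c v i assume x: "(c, v) \<in> S" and i: "i < n" "c i = kplus p v"
  let ?c = "c(i := kminus p v)"
  have z: "(c, flipv p v) \<in> S" "(?c, flipv p v) \<in> S" "(?c, v) \<in> S"
    using x i fun_upd_in_configs kminus_kplus_range[OF p] flipv_in_velos[OF p] by auto
  have "0 < M p (c, flipv p v) (?c, flipv p v)"
    using move_kernel_accept_pos[OF p z(1) i(1)] i x kminus_flipv[OF p] kplus_flipv[OF p] by simp
  moreover have "0 < Phi p (c, v) (c, flipv p v)" "0 < Phi p (?c, flipv p v) (?c, v)"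
    using flip_kernel_flip[OF flip, of p "(c, v)"] flip_kernel_flip[OF flip, of p "(?c, flipv p v)"]
    by (simp_all add: flip_state_def)
  ultimately show "0 < PT p (c, v) (?c, v)"
    using Ptilde_pos_if_path[OF p x z(3,1,2)] by simp
next
  fix c v assume x: "(c, v) \<in> S" and "cnt n c (kplus p v) = 0"
  then have "M p (c, flipv p v) (c, v) = 1"
    using move_kernel_turn[of c p "flipv p v"] kminus_flipv[OF p] by simp
  moreover have "0 < Phi p (c, v) (c, flipv p v)"
    using flip_kernel_flip[OF flip, of p "(c, v)"] by (simp add: flip_state_def)
  moreover have y: "(c, flipv p v) \<in> S"
    using x flipv_in_velos[OF p] by simp
  ultimately show "0 < PT p (c, v) (c, flipv p v)"
    using Ptilde_pos_if_path[OF p x y y x] by simp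
qed

lemma Ptilde_sweeping:
  assumes p: "p \<in> pairsK K"
  obtains kfrom kto where "sweeping K n p (PT p) kfrom kto"
  using sweeping_Ptilde_kminus_kplus[OF p] sweeping_Ptilde_kplus_kminus[OF p] flip_probability_bounds
  by (cases "\<xi> / n < 1") auto

end

context nr_sampler_pos
begin

lemma Q_NR_pos_if_reaches:
  assumes p: "p \<in> pairsK K" and x: "x \<in> S" and y: "y \<in> S"
    and "(kedge S (PT p))\<^sup>+\<^sup>+ x y" and "pair_count p (fst x) \<noteq> 0"
  shows "0 < Q x y"
proof -
  have "\<forall>a\<in>S. \<forall>b\<in>S. 0 \<le> PT p a b"
    using stochastic_Ptilde[OF p] by (simp add: stochastic_kernel_def)
  then obtain t where "1 \<le> t" "0 < kpow S (PT p) t x y"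
    using kpow_pos_if_tranclp_kedge[OF finite_states _ assms(4)] by blast
  then show ?thesis
    using assms(5) by (intro Q_NR_pos[OF p x y]) auto
qed

lemma Q_NR_pos_if_Ptilde_pos:
  assumes p: "p \<in> pairsK K" and x: "x \<in> S" and y: "y \<in> S" and "0 < PT p x y"
  shows "0 < Q x y"
  using Q_NR_pos[OF p x y, of 1] assms(4) kpow_one[OF finite_states y] by simp

lemma Q_NR_self_pos:
  assumes x: "(c, v) \<in> S"
  shows "0 < Q (c, v) (c, v)"
proof -
  define p :: "nat \<times> nat" where "p = (if c 0 = 1 then (1, 2) else (1, c 0))"
  have "c 0 \<in> {1..K}"
    using x n_pos configs_range by auto
  then have p: "p \<in> pairsK K" and "c 0 \<in> {fst p, snd p}"
    using K_ge_2 by (auto simp: p_def pairsK_def)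
  then have "pair_count p c \<noteq> 0"
    using pair_count_pos[of 0 c p] n_pos by simp
  moreover obtain kfrom kto where "sweeping K n p (PT p) kfrom kto"
    using Ptilde_sweeping[OF p] .
  then have "(kedge S (PT p))\<^sup>+\<^sup>+ (c, v) (c, v)"
    using x by (rule sweeping.reaches_self)
  ultimately show ?thesis
    using Q_NR_pos_if_reaches[OF p x x] by simp
qed

lemma Q_NR_flipv_pos:
  assumes x: "(c, v) \<in> S" and p: "p \<in> pairsK K"
  shows "0 < Q (c, v) (c, flipv p v)"
proof -
  have y: "(c, flipv p v) \<in> S"
    using x flipv_in_velos[OF p] by simp
  obtain kfrom kto where sw: "sweeping K n p (PT p) kfrom kto"
    using Ptilde_sweeping[OF p] .
  show ?thesis
  proof (cases "pair_count p c = 0")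
    case True
    then have "cnt n c (kfrom v) = 0"
      using sweeping.kfrom_in_pair[OF sw, of v] x by (auto simp: pair_count_def)
    then have "0 < PT p (c, v) (c, flipv p v)"
      using sweeping.turn_pos[OF sw x] by simp
    then show ?thesis
      using Q_NR_pos_if_Ptilde_pos[OF p x y] by simp
  next
    case False
    then show ?thesis
      using Q_NR_pos_if_reaches[OF p x y sweeping.reaches_flipv[OF sw x]] by simp
  qed
qed

lemma Q_NR_relabel_pos:
  assumes x: "(c, v) \<in> S" and i: "i < n" and b: "b \<in> {1..K}" "b \<noteq> c i"
  shows "0 < Q (c, v) (c(i := b), v)"
proof -
  define p where "p = (min (c i) b, max (c i) b)"
  have p: "p \<in> pairsK K" and ci: "c i \<in> {fst p, snd p}" "b \<in> {fst p, snd p}"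
    using configs_range[of c K n i] x i b by (auto simp: p_def pairsK_def)
  have y: "(c(i := b), v) \<in> S"
    using x fun_upd_in_configs[OF _ i b(1)] by simp
  obtain kfrom kto where "sweeping K n p (PT p) kfrom kto"
    using Ptilde_sweeping[OF p] .
  then have "(kedge S (PT p))\<^sup>+\<^sup>+ (c, v) (c(i := b), v)"
    using x i ci b(2) by (rule sweeping.reaches_relabel)
  then show ?thesis
    using Q_NR_pos_if_reaches[OF p x y] pair_count_pos[of i c p] i ci(1) by simp
qed

lemma rtranclp_kedge_Q_velos:
  assumes c: "c \<in> configs K n" and v': "v' \<in> velos K"
  shows "v \<in> velos K \<Longrightarrow> (kedge S Q)\<^sup>*\<^sup>* (c, v) (c, v')"
proof (induction "card {q \<in> pairsK K. v q \<noteq> v' q}" arbitrary: v rule: less_induct)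
  case less
  show ?case
  proof (cases "{q \<in> pairsK K. v q \<noteq> v' q} = {}")
    case True
    then have "v = v'"
      using less.prems v' unfolding velos_def by (intro PiE_ext[of _ "pairsK K" "\<lambda>_. {-1, 1}"]) auto
    then show ?thesis by simp
  next
    case False
    then obtain q where q: "q \<in> pairsK K" "v q \<noteq> v' q" by auto
    define v1 where "v1 = flipv q v"
    have v1: "v1 \<in> velos K"
      unfolding v1_def using flipv_in_velos[OF q(1) less.prems] .
    have "v1 q = v' q"
      using q velos_range[OF less.prems q(1)] velos_range[OF v' q(1)] by (auto simp: v1_def)
    then have "{q' \<in> pairsK K. v1 q' \<noteq> v' q'} = {q' \<in> pairsK K. v q' \<noteq> v' q'} - {q}"
      by (auto simp: v1_def flipv_def)
    moreover have "card ({q' \<in> pairsK K. v q' \<noteq> v' q'} - {q}) < card {q' \<in> pairsK K. v q' \<noteq> v' q'}"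
      using q finite_pairsK by (intro card_Diff1_less) auto
    ultimately have "card {q' \<in> pairsK K. v1 q' \<noteq> v' q'} < card {q' \<in> pairsK K. v q' \<noteq> v' q'}"
      by simp
    then have "(kedge S Q)\<^sup>*\<^sup>* (c, v1) (c, v')"
      using less.hyps v1 by blast
    moreover have "kedge S Q (c, v) (c, v1)"
      using Q_NR_flipv_pos[of c v q] q c less.prems v1 by (simp add: kedge_def v1_def)
    ultimately show ?thesis
      by (rule converse_rtranclp_into_rtranclp[rotated])
  qed
qed

lemma rtranclp_kedge_Q_configs:
  assumes c': "c' \<in> configs K n" and v: "v \<in> velos K"
  shows "c \<in> configs K n \<Longrightarrow> (kedge S Q)\<^sup>*\<^sup>* (c, v) (c', v)"
proof (induction "card {i. i < n \<and> c i \<noteq> c' i}" arbitrary: c rule: less_induct)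
  case less
  show ?case
  proof (cases "{i. i < n \<and> c i \<noteq> c' i} = {}")
    case True
    then have "c = c'"
      using less.prems c' unfolding configs_def by (intro PiE_ext[of _ "{0..<n}" "\<lambda>_. {1..K}"]) auto
    then show ?thesis by simp
  next
    case False
    then obtain i where i: "i < n" "c i \<noteq> c' i" by auto
    define c1 where "c1 = c(i := c' i)"
    have b: "c' i \<in> {1..K}"
      using configs_range[OF c' i(1)] .
    have c1: "c1 \<in> configs K n"
      unfolding c1_def using fun_upd_in_configs[OF less.prems i(1) b] .
    have "{j. j < n \<and> c1 j \<noteq> c' j} = {j. j < n \<and> c j \<noteq> c' j} - {i}"
      by (auto simp: c1_def)
    moreover have "card ({j. j < n \<and> c j \<noteq> c' j} - {i}) < card {j. j < n \<and> c j \<noteq> c' j}"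
      using i by (intro card_Diff1_less) auto
    ultimately have "card {j. j < n \<and> c1 j \<noteq> c' j} < card {j. j < n \<and> c j \<noteq> c' j}"
      by simp
    then have "(kedge S Q)\<^sup>*\<^sup>* (c1, v) (c', v)"
      using less.hyps c1 by blast
    moreover have "kedge S Q (c, v) (c1, v)"
      using Q_NR_relabel_pos[of c v i "c' i"] i b less.prems v c1 by (simp add: kedge_def c1_def)
    ultimately show ?thesis
      by (rule converse_rtranclp_into_rtranclp[rotated])
  qed
qed

lemma rtranclp_kedge_Q:
  assumes "x \<in> S" "y \<in> S"
  shows "(kedge S Q)\<^sup>*\<^sup>* x y"
proof -
  obtain c v c' v' where "x = (c, v)" "y = (c', v')"
    by (cases x, cases y)
  then show ?thesis
    using assms rtranclp_kedge_Q_velos[of c v' v] rtranclp_kedge_Q_configs[of c' v' c] by auto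
qed

theorem Q_NR_irreducible_aperiodic_ergodic:
  "irreducible_kernel S Q \<and> aperiodic_kernel S Q \<and> uniformly_ergodic S Q \<mu>"
proof -
  have Q_nonneg: "\<forall>x\<in>S. \<forall>y\<in>S. 0 \<le> Q x y"
    using stochastic_Q_NR by (simp add: stochastic_kernel_def)
  have loops: "\<forall>x\<in>S. 0 < Q x x"
    using Q_NR_self_pos by (auto simp del: mem_states_iff)
  obtain m where m: "1 \<le> m" and pos: "\<And>t x y. m \<le> t \<Longrightarrow> x \<in> S \<Longrightarrow> y \<in> S \<Longrightarrow> 0 < kpow S Q t x y"
    using kpow_pos_eventually[OF finite_states Q_nonneg loops] rtranclp_kedge_Q by blast
  have "irreducible_kernel S Q"
    unfolding irreducible_kernel_def using m pos by blast
  moreover have "aperiodic_kernel S Q"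
    using m pos by (intro aperiodic_if_kpow_pos[of m]) auto
  moreover have "uniformly_ergodic S Q \<mu>"
    using m pos by (intro uniformly_ergodic_if_kpow_pos[OF finite_states stochastic_Q_NR
          pi_tilde_nonneg sum_pi_tilde invariant_Q_NR m]) auto
  ultimately show ?thesis by simp
qed

end

theorem mainTheorem5:
  fixes \<pi> :: "config \<Rightarrow> real" and K n :: nat and \<xi> s :: real
  assumes "K \<ge> 2" and "n \<ge> 1"
    and "\<forall>c\<in>configs K n. \<pi> c \<ge> 0" and "(\<Sum>c\<in>configs K n. \<pi> c) = 1"
    and "0 \<le> \<xi>" and "\<xi> \<le> real n" and "0 < s" and "s < 1"
  shows "invariant_kernel (states K n) (Q_NR \<pi> K n \<xi> s) (pi_tilde \<pi> K)
    \<and> ((\<forall>c\<in>configs K n. \<pi> c > 0) \<longrightarrow>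
         irreducible_kernel (states K n) (Q_NR \<pi> K n \<xi> s)
       \<and> aperiodic_kernel (states K n) (Q_NR \<pi> K n \<xi> s)
       \<and> uniformly_ergodic (states K n) (Q_NR \<pi> K n \<xi> s) (pi_tilde \<pi> K))"
proof -
  interpret nr_sampler \<pi> K n \<xi> s
    using assms by unfold_locales auto
  have "irreducible_kernel (states K n) (Q_NR \<pi> K n \<xi> s)
       \<and> aperiodic_kernel (states K n) (Q_NR \<pi> K n \<xi> s)
       \<and> uniformly_ergodic (states K n) (Q_NR \<pi> K n \<xi> s) (pi_tilde \<pi> K)"
    if "\<forall>c\<in>configs K n. \<pi> c > 0"
  proof -
    interpret nr_sampler_pos \<pi> K n \<xi> s
      using that by unfold_locales
    show ?thesis
      by (rule Q_NR_irreducible_aperiodic_ergodic)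
  qed
  then show ?thesis
    using invariant_Q_NR by blast
qed

end
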